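(* Fix a dimension $d\ge 1$ (stochastic and deterministic CA on $\mathbb{Z}^d$). Let $\mathcal{P}_N$ be the decision problem: given two stochastic CA with the same set of states, do they have the same non-deterministic global function? Let $\mathcal{P}_S$ be the decision problem: given two stochastic CA with the same set of states, do they have the same stochastic global function? Then the surjectivity problem for classical deterministic cellular automata (given a deterministic CA $F:Q^{\mathbb{Z}^d}\to Q^{\mathbb{Z}^d}$, is $F$ surjective?) is (computably) reducible to $\mathcal{P}_N$ and also to $\mathcal{P}_S$.
   Context: A stochastic cellular automaton (stochastic CA) is a tuple $(Q,R,V,V',f)$ where $Q$ is a finite set of states, $R$ a finite set of random symbols, $V=\{v_1,\dots,v_r\}$ and $V'=\{v'_1,\dots,v'_{r'}\}$ finite subsets of $\mathbb{Z}$ (neighborhoods), and $f:Q^r\times R^{r'}\to Q$ a local transition function. Its explicit global function $F:Q^{\mathbb{Z}}\times R^{\mathbb{Z}}\to Q^{\mathbb{Z}}$ is $F(c,s)_z=f\big((c_{z+v_1},\dots,c_{z+v_r}),(s_{z+v'_1},\dots,s_{z+v'_{r'}})\big)$ (in dimension $d$ the same definitions are used with $\mathbb{Z}$ replaced by $\mathbb{Z}^d$). Cylinders are $[u]_z=\{c: c_{z+x}=u_x \text{ for } 0\le x<|u|\}$; $\nu_R$ denotes the uniform Bernoulli measure on $R^{\mathbb{Z}}$. The non-deterministic global function is $N_F(c)=\{F(c,s): s\in R^{\mathbb{Z}}\}$. The stochastic global function $S_F:Q^{\mathbb{Z}}\to\mathcal{M}(Q^{\mathbb{Z}})$ (Borel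 probability measures) is given by $S_F(c)([u]_z)=\nu_R(\{s\in R^{\mathbb{Z}}: F(c,s)\in[u]_z\})$, i.e. $S_F(c)$ is the law of $F(c,s)$ for $s$ uniformly random. *)

theory Defs
  imports "HOL-Probability.Probability" "HOL-Library.Nat_Bijection"
begin

inductive recfn :: "nat \<Rightarrow> (nat list \<Rightarrow> nat) \<Rightarrow> bool" where
  rf_zero: "recfn k (\<lambda>_. 0)"
| rf_succ: "recfn 1 (\<lambda>xs. Suc (hd xs))"
| rf_proj: "i < k \<Longrightarrow> recfn k (\<lambda>xs. xs ! i)"
| rf_comp: "recfn m f \<Longrightarrow> length gs = m \<Longrightarrow> (\<forall>g\<in>set gs. recfn k g) \<Longrightarrow>
            recfn k (\<lambda>xs. f (map (\<lambda>g. g xs) gs))"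
| rf_prim: "recfn k g \<Longrightarrow> recfn (Suc (Suc k)) h \<Longrightarrow>
            recfn (Suc k) (\<lambda>xs. rec_nat (g (tl xs)) (\<lambda>n acc. h (n # acc # tl xs)) (hd xs))"
| rf_mu: "recfn (Suc k) g \<Longrightarrow> (\<forall>xs. length xs = k \<longrightarrow> (\<exists>y. g (y # xs) = 0)) \<Longrightarrow>
          recfn k (\<lambda>xs. LEAST y. g (y # xs) = 0)"

definition computable :: "(nat \<Rightarrow> nat) \<Rightarrow> bool" where
  "computable f \<longleftrightarrow> (\<exists>g. recfn 1 g \<and> (\<forall>n. g [n] = f n))"

text \<open>Many-one (computable) reduction between decision problems on coded instances.
  A problem is a pair (valid instance codes, yes-instances).\<close>
definition reduces_to ::
  "((nat \<Rightarrow> bool) \<times> (nat \<Rightarrow> bool)) \<Rightarrow> ((nat \<Rightarrow> bool) \<times> (nat \<Rightarrow> bool)) \<Rightarrow> bool" where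
  "reduces_to P P' \<longleftrightarrow> (\<exists>r. computable r \<and>
      (\<forall>n. fst P n \<longrightarrow> fst P' (r n) \<and> (snd P n \<longleftrightarrow> snd P' (r n))))"

text \<open>Points of Z^d are integer lists of length d; configurations are extensional
  functions on this lattice (value undefined outside).\<close>
definition lattice :: "nat \<Rightarrow> int list set" where
  "lattice d = {z. length z = d}"

definition configs :: "nat \<Rightarrow> 'a set \<Rightarrow> (int list \<Rightarrow> 'a) set" where
  "configs d A = (lattice d \<rightarrow>\<^sub>E A)"

definition vadd :: "int list \<Rightarrow> int list \<Rightarrow> int list" where
  "vadd z v = map2 (+) z v"

text \<open>A deterministic CA: (number of states q, with Q = {0..<q}; neighbourhood list;
  local rule as a lookup table).\<close>
type_synonym dca = "nat \<times> int list list \<times> (nat list \<times> nat) list"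

definition dca_valid :: "nat \<Rightarrow> dca \<Rightarrow> bool" where
  "dca_valid d A = (case A of (q, V, tab) \<Rightarrow>
     q \<ge> 1 \<and> (\<forall>v\<in>set V. length v = d) \<and>
     (\<forall>u. length u = length V \<and> set u \<subseteq> {0..<q} \<longrightarrow>
        (\<exists>a\<in>{0..<q}. map_of tab u = Some a)))"

definition dca_global :: "nat \<Rightarrow> dca \<Rightarrow> (int list \<Rightarrow> nat) \<Rightarrow> (int list \<Rightarrow> nat)" where
  "dca_global d A c = (case A of (q, V, tab) \<Rightarrow>
     restrict (\<lambda>z. the (map_of tab (map (\<lambda>v. c (vadd z v)) V))) (lattice d))"

definition dca_surjective :: "nat \<Rightarrow> dca \<Rightarrow> bool" where
  "dca_surjective d A = (case A of (q, V, tab) \<Rightarrow>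
     dca_global d A ` configs d {0..<q} = configs d {0..<q})"

text \<open>(q, with Q = {0..<q}; number of random symbols m, with R = {0..<m};
  neighbourhood V; random neighbourhood V'; local rule table on Q^r x R^r').\<close>
type_synonym sca = "nat \<times> nat \<times> int list list \<times> int list list \<times> ((nat list \<times> nat list) \<times> nat) list"

definition sca_valid :: "nat \<Rightarrow> sca \<Rightarrow> bool" where
  "sca_valid d A = (case A of (q, m, V, V', tab) \<Rightarrow>
     q \<ge> 1 \<and> m \<ge> 1 \<and> (\<forall>v\<in>set V. length v = d) \<and> (\<forall>v\<in>set V'. length v = d) \<and>
     (\<forall>u w. length u = length V \<and> set u \<subseteq> {0..<q} \<and>
            length w = length V' \<and> set w \<subseteq> {0..<m} \<longrightarrow>
        (\<exists>a\<in>{0..<q}. map_of tab (u, w) = Some a)))"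

definition sca_states :: "sca \<Rightarrow> nat" where
  "sca_states A = fst A"

definition sca_randoms :: "sca \<Rightarrow> nat" where
  "sca_randoms A = fst (snd A)"

definition sca_F :: "nat \<Rightarrow> sca \<Rightarrow> (int list \<Rightarrow> nat) \<Rightarrow> (int list \<Rightarrow> nat) \<Rightarrow> (int list \<Rightarrow> nat)" where
  "sca_F d A c s = (case A of (q, m, V, V', tab) \<Rightarrow>
     restrict (\<lambda>z. the (map_of tab (map (\<lambda>v. c (vadd z v)) V, map (\<lambda>v. s (vadd z v)) V')))
       (lattice d))"

definition sca_N :: "nat \<Rightarrow> sca \<Rightarrow> (int list \<Rightarrow> nat) \<Rightarrow> (int list \<Rightarrow> nat) set" where
  "sca_N d A c = (\<lambda>s. sca_F d A c s) ` configs d {0..<sca_randoms A}"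

definition bernoulli_unif :: "nat \<Rightarrow> nat \<Rightarrow> (int list \<Rightarrow> nat) measure" where
  "bernoulli_unif d m = PiM (lattice d) (\<lambda>_. uniform_count_measure {0..<m})"

definition sca_S :: "nat \<Rightarrow> sca \<Rightarrow> (int list \<Rightarrow> nat) \<Rightarrow> (int list \<Rightarrow> nat) measure" where
  "sca_S d A c = distr (bernoulli_unif d (sca_randoms A))
                       (PiM (lattice d) (\<lambda>_. count_space {0..<sca_states A}))
                       (sca_F d A c)"

definition dec_intlist :: "nat \<Rightarrow> int list" where
  "dec_intlist n = map int_decode (list_decode n)"

definition dec_vecs :: "nat \<Rightarrow> int list list" where
  "dec_vecs n = map dec_intlist (list_decode n)"

definition dca_decode :: "nat \<Rightarrow> dca" where
  "dca_decode n = (let (a, b) = prod_decode n; (c, e) = prod_decode b in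
     (a, dec_vecs c, map (\<lambda>p. case prod_decode p of (u, v) \<Rightarrow> (list_decode u, v)) (list_decode e)))"

definition sca_decode :: "nat \<Rightarrow> sca" where
  "sca_decode n = (let (a, b) = prod_decode n; (m, b2) = prod_decode b;
                       (c, b3) = prod_decode b2; (c', e) = prod_decode b3 in
     (a, m, dec_vecs c, dec_vecs c',
      map (\<lambda>p. case prod_decode p of (uw, v) \<Rightarrow>
                 (case prod_decode uw of (u, w) \<Rightarrow> ((list_decode u, list_decode w), v)))
          (list_decode e)))"

definition pair_decode :: "nat \<Rightarrow> sca \<times> sca" where
  "pair_decode n = (case prod_decode n of (a, b) \<Rightarrow> (sca_decode a, sca_decode b))"

definition SURJ :: "nat \<Rightarrow> (nat \<Rightarrow> bool) \<times> (nat \<Rightarrow> bool)" where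
  "SURJ d = ((\<lambda>n. dca_valid d (dca_decode n)), (\<lambda>n. dca_surjective d (dca_decode n)))"

definition pair_valid :: "nat \<Rightarrow> nat \<Rightarrow> bool" where
  "pair_valid d n = (case pair_decode n of (A, B) \<Rightarrow>
     sca_valid d A \<and> sca_valid d B \<and> sca_states A = sca_states B)"

definition P_N :: "nat \<Rightarrow> (nat \<Rightarrow> bool) \<times> (nat \<Rightarrow> bool)" where
  "P_N d = (pair_valid d, (\<lambda>n. case pair_decode n of (A, B) \<Rightarrow>
     (\<forall>c\<in>configs d {0..<sca_states A}. sca_N d A c = sca_N d B c)))"

definition P_S :: "nat \<Rightarrow> (nat \<Rightarrow> bool) \<times> (nat \<Rightarrow> bool)" where
  "P_S d = (pair_valid d, (\<lambda>n. case pair_decode n of (A, B) \<Rightarrow>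
     (\<forall>c\<in>configs d {0..<sca_states A}. sca_S d A c = sca_S d B c)))"

end

theory Submission
  imports Defs
begin

text \<open>
  The reduction sends a deterministic CA \<open>F\<close> with local rule \<open>f\<close> to two stochastic CA on the same
  states: \<open>A\<close> applies \<open>f\<close> to the random field and ignores the configuration, \<open>B\<close> copies the
  random symbol of each cell. Then \<open>N\<^sub>A(c)\<close> is the image of \<open>F\<close> and \<open>N\<^sub>B(c)\<close> is the full shift,
  which agree exactly when \<open>F\<close> is surjective; \<open>S\<^sub>A(c)\<close> is the image of the uniform Bernoulli
  measure under \<open>F\<close> and \<open>S\<^sub>B(c)\<close> is that measure itself. If \<open>F\<close> is not surjective, compactness
  gives a finite pattern outside its image, a cylinder of positive measure missed by \<open>F\<close>. If \<open>F\<close>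
  is surjective it is balanced (Hedlund): every pattern on a finite window \<open>J\<close> has exactly
  \<open>q ^ (|J + V| - |J|)\<close> preimages on \<open>J + V\<close>, so \<open>F\<close> preserves the measure of every cylinder.
  Balance is a counting argument: a pattern with fewer preimages than average, repeated on \<open>L\<^sup>d\<close>
  disjoint translates of \<open>J\<close> inside a box, leaves too few preimages for all patterns of the box
  once the volume term \<open>L\<^sup>d\<close> dominates the boundary term \<open>L ^ (d - 1)\<close>.
  Finally the reduction is a primitive recursive transformation of codes.
\<close>

subsection \<open>General recursive functions\<close>

text \<open>Unlike \<open>recfn\<close>, this only constrains values on argument lists of the right length.\<close>
definition recursive :: "nat \<Rightarrow> (nat list \<Rightarrow> nat) \<Rightarrow> bool" where
  "recursive k f \<longleftrightarrow> (\<exists>g. recfn k g \<and> (\<forall>xs. length xs = k \<longrightarrow> g xs = f xs))"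

definition recursive1 :: "(nat \<Rightarrow> nat) \<Rightarrow> bool" where
  "recursive1 f \<longleftrightarrow> recursive 1 (\<lambda>xs. f (xs!0))"

definition recursive2 :: "(nat \<Rightarrow> nat \<Rightarrow> nat) \<Rightarrow> bool" where
  "recursive2 f \<longleftrightarrow> recursive 2 (\<lambda>xs. f (xs!0) (xs!1))"

lemma recursive_cong: "recursive k f \<Longrightarrow> (\<And>xs. length xs = k \<Longrightarrow> f xs = g xs) \<Longrightarrow> recursive k g"
  unfolding recursive_def by metis

lemma recursive_succ: "recursive 1 (\<lambda>xs. Suc (hd xs))"
  unfolding recursive_def using rf_succ by blast

lemma recursive_nth: "i < k \<Longrightarrow> recursive k (\<lambda>xs. xs ! i)"
  unfolding recursive_def using rf_proj by blast

lemma recursive_comp: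
  assumes f: "recursive m f" and len: "length gs = m" and gs: "\<forall>g\<in>set gs. recursive k g"
  shows "recursive k (\<lambda>xs. f (map (\<lambda>g. g xs) gs))"
proof -
  obtain f' where f': "recfn m f'" "\<forall>xs. length xs = m \<longrightarrow> f' xs = f xs"
    using f unfolding recursive_def by blast
  have "\<exists>gs'. length gs' = length gs \<and> (\<forall>g\<in>set gs'. recfn k g) \<and>
          (\<forall>xs. length xs = k \<longrightarrow> map (\<lambda>g. g xs) gs' = map (\<lambda>g. g xs) gs)"
    using gs
  proof (induction gs)
    case (Cons g gs)
    then obtain gs' where gs': "length gs' = length gs" "\<forall>g\<in>set gs'. recfn k g"
        "\<forall>xs. length xs = k \<longrightarrow> map (\<lambda>g. g xs) gs' = map (\<lambda>g. g xs) gs" by auto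
    from Cons.prems obtain g' where "recfn k g'" "\<forall>xs. length xs = k \<longrightarrow> g' xs = g xs"
      unfolding recursive_def by auto
    with gs' show ?case by (intro exI[of _ "g' # gs'"]) auto
  qed simp
  then obtain gs' where gs': "length gs' = length gs" "\<forall>g\<in>set gs'. recfn k g"
        "\<forall>xs. length xs = k \<longrightarrow> map (\<lambda>g. g xs) gs' = map (\<lambda>g. g xs) gs" by blast
  have "recfn k (\<lambda>xs. f' (map (\<lambda>g. g xs) gs'))"
    using rf_comp[OF f'(1)] gs' len by auto
  moreover have "\<forall>xs. length xs = k \<longrightarrow> f' (map (\<lambda>g. g xs) gs') = f (map (\<lambda>g. g xs) gs)"
    using gs' f' len by (metis length_map)
  ultimately show ?thesis unfolding recursive_def by blast
qed

lemma recursive_prim_rec: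
  assumes g: "recursive k g" and h: "recursive (Suc (Suc k)) h"
  shows "recursive (Suc k) (\<lambda>xs. rec_nat (g (tl xs)) (\<lambda>n acc. h (n # acc # tl xs)) (hd xs))"
proof -
  obtain g' where g': "recfn k g'" "\<forall>xs. length xs = k \<longrightarrow> g' xs = g xs"
    using g unfolding recursive_def by blast
  obtain h' where h': "recfn (Suc (Suc k)) h'" "\<forall>xs. length xs = Suc (Suc k) \<longrightarrow> h' xs = h xs"
    using h unfolding recursive_def by blast
  have "rec_nat (g' (tl xs)) (\<lambda>n acc. h' (n # acc # tl xs)) (hd xs) =
        rec_nat (g (tl xs)) (\<lambda>n acc. h (n # acc # tl xs)) (hd xs)" if "length xs = Suc k" for xs
    by (induction "hd xs") (use that g' h' in auto)
  then show ?thesis using rf_prim[OF g'(1) h'(1)] unfolding recursive_def by blast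
qed

lemma recursive_minimization:
  assumes g: "recursive (Suc k) g" and total: "\<And>xs. length xs = k \<Longrightarrow> \<exists>y. g (y # xs) = 0"
  shows "recursive k (\<lambda>xs. LEAST y. g (y # xs) = 0)"
proof -
  obtain g' where g': "recfn (Suc k) g'" "\<forall>xs. length xs = Suc k \<longrightarrow> g' xs = g xs"
    using g unfolding recursive_def by blast
  then have eq: "\<And>xs y. length xs = k \<Longrightarrow> g' (y # xs) = g (y # xs)" by auto
  have "recfn k (\<lambda>xs. LEAST y. g' (y # xs) = 0)"
    using rf_mu[OF g'(1)] total eq by metis
  with eq show ?thesis unfolding recursive_def by auto
qed

lemma recursive_comp1: "recursive 1 f \<Longrightarrow> recursive k g \<Longrightarrow> recursive k (\<lambda>xs. f [g xs])"
  using recursive_comp[of 1 f "[g]" k] by simp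

lemma recursive_comp2:
  "recursive 2 f \<Longrightarrow> recursive k g \<Longrightarrow> recursive k h \<Longrightarrow> recursive k (\<lambda>xs. f [g xs, h xs])"
  using recursive_comp[of 2 f "[g, h]" k] by simp

lemma recursive_comp3: "recursive 3 f \<Longrightarrow> recursive k g \<Longrightarrow> recursive k h \<Longrightarrow> recursive k i \<Longrightarrow>
    recursive k (\<lambda>xs. f [g xs, h xs, i xs])"
  using recursive_comp[of 3 f "[g, h, i]" k] by simp

lemma recursive_const: "recursive k (\<lambda>_. c)"
proof (induction c)
  case 0
  show ?case unfolding recursive_def using rf_zero by blast
next
  case (Suc c)
  from recursive_comp1[OF recursive_succ Suc] show ?case by simp
qed

lemma recursive1_apply: "recursive1 f \<Longrightarrow> recursive k g \<Longrightarrow> recursive k (\<lambda>xs. f (g xs))"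
  unfolding recursive1_def using recursive_comp1[of "\<lambda>xs. f (xs!0)" k g] by simp

lemma recursive2_apply:
  "recursive2 f \<Longrightarrow> recursive k g \<Longrightarrow> recursive k h \<Longrightarrow> recursive k (\<lambda>xs. f (g xs) (h xs))"
  unfolding recursive2_def using recursive_comp2[of "\<lambda>xs. f (xs!0) (xs!1)" k g h] by simp

lemma recursive1I:
  assumes "recursive k g" "k = 1" "\<And>a. g [a] = f a" shows "recursive1 f"
  unfolding recursive1_def using assms(1) unfolding assms(2)
  by (rule recursive_cong) (auto simp: length_Suc_conv assms(3))

lemma recursive2I:
  assumes "recursive k g" "k = 2" "\<And>a b. g [a, b] = f a b" shows "recursive2 f"
  unfolding recursive2_def using assms(1) unfolding assms(2)
  by (rule recursive_cong) (auto simp: length_Suc_conv numeral_2_eq_2 assms(3))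

lemma recursive_arg_1_0: "recursive 1 (\<lambda>xs. xs!0)" by (rule recursive_nth) simp
lemma recursive_arg_2_0: "recursive 2 (\<lambda>xs. xs!0)" by (rule recursive_nth) simp
lemma recursive_arg_2_1: "recursive 2 (\<lambda>xs. xs!1)" by (rule recursive_nth) simp
lemma recursive_arg_3_1: "recursive 3 (\<lambda>xs. xs!1)" by (rule recursive_nth) simp

lemma recursive1_compose: "recursive1 f \<Longrightarrow> recursive1 g \<Longrightarrow> recursive1 (\<lambda>x. f (g x))"
  unfolding recursive1_def by (rule recursive1_apply[unfolded recursive1_def])

lemma recursive1_rec_nat:
  assumes "recursive2 h"
  shows "recursive1 (rec_nat c h)"
proof -
  have "recursive (Suc (Suc 0)) (\<lambda>xs. h (xs!0) (xs!1))"
    using assms unfolding recursive2_def by (simp add: numeral_2_eq_2)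
  from recursive_prim_rec[OF recursive_const[of 0 c] this]
  show ?thesis by (rule recursive1I) auto
qed

lemma recursive2_rec_nat:
  assumes g: "recursive1 g" and h: "recursive 3 (\<lambda>xs. h (xs!0) (xs!1) (xs!2))"
  shows "recursive2 (\<lambda>n y. rec_nat (g y) (\<lambda>n acc. h n acc y) n)"
proof -
  have g': "recursive (Suc 0) (\<lambda>xs. g (xs!0))" using g unfolding recursive1_def by simp
  have h': "recursive (Suc (Suc (Suc 0))) (\<lambda>xs. h (xs!0) (xs!1) (xs!2))"
    using h by (simp add: numeral_3_eq_3)
  from recursive_prim_rec[OF g' h']
  show ?thesis by (rule recursive2I) (auto simp: numeral_2_eq_2)
qed

lemma recursive1_Suc: "recursive1 Suc"
  by (rule recursive1I[OF recursive_succ]) simp_all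

lemma recursive1_pred: "recursive1 (\<lambda>n. n - 1)"
proof -
  have "recursive1 (rec_nat 0 (\<lambda>a b. a))"
    by (rule recursive1_rec_nat) (simp add: recursive2_def recursive_arg_2_0)
  moreover have "rec_nat 0 (\<lambda>a b. a) = (\<lambda>n::nat. n - 1)"
  proof
    fix n :: nat show "rec_nat 0 (\<lambda>a b. a) n = n - 1" by (cases n) auto
  qed
  ultimately show ?thesis by simp
qed

lemma recursive2_plus: "recursive2 (+)"
proof -
  have "recursive 3 (\<lambda>xs. Suc (xs!1))"
    by (rule recursive1_apply[OF recursive1_Suc recursive_arg_3_1])
  then have "recursive2 (\<lambda>n y. rec_nat (id y) (\<lambda>n acc. Suc acc) n)"
    by (intro recursive2_rec_nat) (auto simp: recursive1_def intro: recursive_nth)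
  moreover have "rec_nat y (\<lambda>n acc. Suc acc) n = n + y" for n y :: nat by (induction n) auto
  ultimately show ?thesis by simp
qed

lemma recursive2_minus: "recursive2 (-)"
proof -
  have "recursive 3 (\<lambda>xs. xs!1 - 1)"
    by (rule recursive1_apply[OF recursive1_pred recursive_arg_3_1])
  then have "recursive2 (\<lambda>n y. rec_nat (id y) (\<lambda>n acc. acc - 1) n)"
    by (intro recursive2_rec_nat) (auto simp: recursive1_def intro: recursive_nth)
  moreover have "rec_nat y (\<lambda>n acc. acc - 1) n = y - n" for n y :: nat by (induction n) auto
  ultimately have "recursive2 (\<lambda>n y. y - n)" by simp
  from recursive2_apply[OF this recursive_arg_2_1 recursive_arg_2_0]
  show ?thesis unfolding recursive2_def by simp
qed

lemma recursive_if_zero: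
  assumes "recursive k t" "recursive k a" "recursive k b"
  shows "recursive k (\<lambda>xs. if t xs = 0 then a xs else b xs)"
proof -
  have "recursive 2 (\<lambda>ys. ys!0)" "recursive (Suc (Suc 2)) (\<lambda>ys. ys!3)"
    by (auto intro: recursive_nth)
  from recursive_prim_rec[OF this]
  have "recursive (Suc 2) (\<lambda>xs. rec_nat ((tl xs)!0) (\<lambda>n acc. (n # acc # tl xs)!3) (hd xs))" .
  then have "recursive 3 (\<lambda>xs. rec_nat ((tl xs)!0) (\<lambda>n acc. (n # acc # tl xs)!3) (hd xs))"
    by simp
  then have select: "recursive 3 (\<lambda>xs. if xs!0 = 0 then xs!1 else xs!2)"
  proof (rule recursive_cong)
    fix xs :: "nat list" assume "length xs = 3"
    then obtain a b c where "xs = [a, b, c]" by (auto simp: numeral_3_eq_3 length_Suc_conv)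
    then show "rec_nat ((tl xs)!0) (\<lambda>n acc. (n # acc # tl xs)!3) (hd xs) =
        (if xs!0 = 0 then xs!1 else xs!2)"
      by (cases a) (auto simp: numeral_3_eq_3)
  qed
  have "[x, y, z]!1 = y" "[x, y, z]!2 = z" for x y z :: nat
    by (simp_all add: numeral_2_eq_2)
  with recursive_comp3[OF select assms] show ?thesis by (simp only: nth_Cons_0)
qed

subsection \<open>Computability of the list coding\<close>

lemma recursive1_triangle: "recursive1 triangle"
proof -
  have "recursive 2 (\<lambda>xs. Suc (xs!0) + xs!1)"
    by (rule recursive2_apply[OF recursive2_plus recursive1_apply[OF recursive1_Suc recursive_arg_2_0]
          recursive_arg_2_1])
  then have "recursive1 (rec_nat 0 (\<lambda>a b. Suc a + b))"
    by (intro recursive1_rec_nat) (simp add: recursive2_def)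
  moreover have "rec_nat 0 (\<lambda>a b. Suc a + b) = triangle"
    by (rule ext, induct_tac x) auto
  ultimately show ?thesis by simp
qed

lemma recursive2_prod_encode: "recursive2 (\<lambda>x y. prod_encode (x, y))"
proof -
  have "recursive 2 (\<lambda>xs. triangle (xs!0 + xs!1) + xs!0)"
    by (rule recursive2_apply[OF recursive2_plus recursive1_apply[OF recursive1_triangle
          recursive2_apply[OF recursive2_plus recursive_arg_2_0 recursive_arg_2_1]] recursive_arg_2_0])
  then show ?thesis unfolding recursive2_def prod_encode_def by simp
qed

definition cantor_diagonal :: "nat \<Rightarrow> nat" where
  "cantor_diagonal n = (LEAST s. 1 - (triangle (Suc s) - n) = 0)"

lemma recursive1_cantor_diagonal: "recursive1 cantor_diagonal"
proof -
  have g: "recursive (Suc 1) (\<lambda>xs. 1 - (triangle (Suc (xs!0)) - xs!1))"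
    using recursive2_apply[OF recursive2_minus recursive_const recursive2_apply[OF recursive2_minus
        recursive1_apply[OF recursive1_triangle recursive1_apply[OF recursive1_Suc recursive_arg_2_0]]
        recursive_arg_2_1], of 1]
    by (simp add: numeral_2_eq_2)
  have "recursive 1 (\<lambda>xs. LEAST y. 1 - (triangle (Suc ((y # xs)!0)) - (y # xs)!1) = 0)"
  proof (rule recursive_minimization[OF g])
    fix xs :: "nat list"
    have "xs!0 < triangle (Suc (xs!0))" by (induction "xs!0") auto
    then show "\<exists>y. 1 - (triangle (Suc ((y # xs)!0)) - (y # xs)!1) = 0"
      by (intro exI[of _ "xs!0"]) simp
  qed
  then show ?thesis by (rule recursive1I) (simp_all add: cantor_diagonal_def)
qed

lemma triangle_mono: "a \<le> b \<Longrightarrow> triangle a \<le> triangle b"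
  by (induction b) (auto simp: le_Suc_eq)

lemma cantor_diagonal_prod_encode: "cantor_diagonal (prod_encode (x, y)) = x + y"
proof -
  let ?n = "prod_encode (x, y)"
  have n: "?n = triangle (x + y) + x" by (simp add: prod_encode_def)
  have P: "1 - (triangle (Suc s) - ?n) = 0 \<longleftrightarrow> ?n < triangle (Suc s)" for s by auto
  show ?thesis unfolding cantor_diagonal_def P
  proof (rule Least_equality)
    show "?n < triangle (Suc (x + y))" using n by simp
    fix s assume "?n < triangle (Suc s)"
    then show "x + y \<le> s" using n triangle_mono[of "Suc s" "x + y"] by (rule_tac ccontr) auto
  qed
qed

lemma prod_decode_eq_cantor_diagonal:
  "fst (prod_decode n) = n - triangle (cantor_diagonal n)"
  "snd (prod_decode n) = cantor_diagonal n - (n - triangle (cantor_diagonal n))"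
proof -
  obtain x y where n: "n = prod_encode (x, y)" by (metis prod_decode_inverse surj_pair)
  show "fst (prod_decode n) = n - triangle (cantor_diagonal n)"
    "snd (prod_decode n) = cantor_diagonal n - (n - triangle (cantor_diagonal n))"
    unfolding n cantor_diagonal_prod_encode prod_encode_inverse by (auto simp: prod_encode_def)
qed

lemma recursive1_fst_prod_decode: "recursive1 (\<lambda>n. fst (prod_decode n))"
  unfolding recursive1_def prod_decode_eq_cantor_diagonal
  by (rule recursive2_apply[OF recursive2_minus recursive_arg_1_0 recursive1_apply[OF recursive1_triangle
        recursive1_apply[OF recursive1_cantor_diagonal recursive_arg_1_0]]])

lemma recursive1_snd_prod_decode: "recursive1 (\<lambda>n. snd (prod_decode n))"
  unfolding recursive1_def prod_decode_eq_cantor_diagonal(2)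
  by (rule recursive2_apply[OF recursive2_minus recursive1_apply[OF recursive1_cantor_diagonal
        recursive_arg_1_0] recursive1_fst_prod_decode[unfolded recursive1_def prod_decode_eq_cantor_diagonal(1)]])

definition list_code_hd :: "nat \<Rightarrow> nat" where "list_code_hd e = fst (prod_decode (e - 1))"
definition list_code_tl :: "nat \<Rightarrow> nat" where "list_code_tl e = snd (prod_decode (e - 1))"

lemma list_code_hd_tl [simp]:
  "list_code_hd (list_encode (x # xs)) = x" "list_code_tl (list_encode (x # xs)) = list_encode xs"
  by (simp_all add: list_code_hd_def list_code_tl_def)

lemma recursive1_list_code_hd: "recursive1 list_code_hd"
  unfolding recursive1_def list_code_hd_def
  by (rule recursive1_apply[OF recursive1_fst_prod_decode recursive1_apply[OF recursive1_pred recursive_arg_1_0]])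

lemma recursive1_list_code_tl: "recursive1 list_code_tl"
  unfolding recursive1_def list_code_tl_def
  by (rule recursive1_apply[OF recursive1_snd_prod_decode recursive1_apply[OF recursive1_pred recursive_arg_1_0]])

text \<open>One step moves the mapped head of the first component of a coded pair of lists onto the
  second, so iterating it maps and reverses a list.\<close>
definition map_rev_step :: "(nat \<Rightarrow> nat) \<Rightarrow> nat \<Rightarrow> nat" where
  "map_rev_step \<phi> w = (if fst (prod_decode w) = 0 then w else
     prod_encode (list_code_tl (fst (prod_decode w)),
       Suc (prod_encode (\<phi> (list_code_hd (fst (prod_decode w))), snd (prod_decode w)))))"

definition map_rev_code :: "(nat \<Rightarrow> nat) \<Rightarrow> nat \<Rightarrow> nat" where
  "map_rev_code \<phi> e = snd (prod_decode (rec_nat (prod_encode (e, 0)) (\<lambda>n. map_rev_step \<phi>) e))"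

definition map_code :: "(nat \<Rightarrow> nat) \<Rightarrow> nat \<Rightarrow> nat" where
  "map_code \<phi> e = map_rev_code id (map_rev_code \<phi> e)"

lemma recursive1_map_rev_step: "recursive1 \<phi> \<Longrightarrow> recursive1 (map_rev_step \<phi>)"
  unfolding recursive1_def map_rev_step_def
  by (rule recursive_if_zero recursive2_apply[OF recursive2_prod_encode] recursive1_apply
        recursive1_Suc recursive1_fst_prod_decode recursive1_snd_prod_decode
        recursive1_list_code_hd recursive1_list_code_tl recursive_arg_1_0
        | assumption | simp only: recursive1_def[symmetric])+

lemma map_rev_step_funpow:
  "length xs \<le> k \<Longrightarrow> (map_rev_step \<phi> ^^ k) (prod_encode (list_encode xs, list_encode acc)) =
     prod_encode (0, list_encode (rev (map \<phi> xs) @ acc))"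
proof (induction xs arbitrary: k acc)
  case Nil
  have "(map_rev_step \<phi> ^^ k) (prod_encode (0, a)) = prod_encode (0, a)" for a
    by (induction k) (auto simp: map_rev_step_def)
  then show ?case by simp
next
  case (Cons x xs)
  then obtain k' where k: "k = Suc k'" "length xs \<le> k'" by (cases k) auto
  have "map_rev_step \<phi> (prod_encode (list_encode (x # xs), list_encode acc)) =
        prod_encode (list_encode xs, list_encode (\<phi> x # acc))"
    by (simp add: map_rev_step_def del: list_encode.simps) simp
  then show ?case
    using Cons.IH[OF k(2), of "\<phi> x # acc"]
    by (simp add: k funpow_Suc_right del: funpow.simps list_encode.simps)
qed

lemma length_le_list_encode: "length xs \<le> list_encode xs"
  by (induction xs) (auto intro: le_trans[OF _ le_prod_encode_2])

lemma map_rev_code_eq: "map_rev_code \<phi> e = list_encode (rev (map \<phi> (list_decode e)))"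
proof -
  have "rec_nat w (\<lambda>n. map_rev_step \<phi>) k = (map_rev_step \<phi> ^^ k) w" for w k
    by (induction k) auto
  moreover have "(map_rev_step \<phi> ^^ e) (prod_encode (list_encode (list_decode e), list_encode [])) =
     prod_encode (0, list_encode (rev (map \<phi> (list_decode e)) @ []))"
    by (rule map_rev_step_funpow) (metis length_le_list_encode list_decode_inverse)
  ultimately show ?thesis unfolding map_rev_code_def by simp
qed

lemma map_code_eq: "map_code \<phi> e = list_encode (map \<phi> (list_decode e))"
  unfolding map_code_def map_rev_code_eq by simp

lemma recursive1_map_rev_code: "recursive1 \<phi> \<Longrightarrow> recursive1 (map_rev_code \<phi>)"
proof -
  assume \<phi>: "recursive1 \<phi>"
  have "recursive1 (\<lambda>e. prod_encode (e, 0))"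
    unfolding recursive1_def by (rule recursive2_apply[OF recursive2_prod_encode recursive_arg_1_0 recursive_const])
  moreover have "recursive 3 (\<lambda>xs. map_rev_step \<phi> (xs!1))"
    by (rule recursive1_apply[OF recursive1_map_rev_step[OF \<phi>] recursive_arg_3_1])
  ultimately have "recursive2 (\<lambda>n y. rec_nat (prod_encode (y, 0)) (\<lambda>n acc. map_rev_step \<phi> acc) n)"
    by (rule recursive2_rec_nat)
  from recursive1_apply[OF recursive1_snd_prod_decode recursive2_apply[OF this recursive_arg_1_0 recursive_arg_1_0]]
  show ?thesis unfolding recursive1_def map_rev_code_def by simp
qed

lemma recursive1_map_code: "recursive1 \<phi> \<Longrightarrow> recursive1 (map_code \<phi>)"
  unfolding map_code_def
  by (rule recursive1_compose[OF recursive1_map_rev_code recursive1_map_rev_code])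
     (auto simp: recursive1_def intro: recursive_nth)

subsection \<open>Counting patterns\<close>

lemma card_PiE_fixed_on:
  assumes "finite Y" "U \<subseteq> Y" "\<And>z. z \<in> U \<Longrightarrow> P z < q"
  shows "card {y \<in> PiE Y (\<lambda>_. {0..<q}). \<forall>z\<in>U. y z = P z} = q ^ card (Y - U)"
proof -
  have "{y \<in> PiE Y (\<lambda>_. {0..<q}). \<forall>z\<in>U. y z = P z} = PiE Y (\<lambda>z. if z \<in> U then {P z} else {0..<q})"
    using assms(2,3) by (auto simp: PiE_iff extensional_def split: if_splits)
  moreover have "card (PiE Y (\<lambda>z. if z \<in> U then {P z} else {0..<q})) = (\<Prod>z\<in>Y. if z \<in> U then 1 else q)"
    by (simp add: card_PiE[OF assms(1)] if_distrib cong: if_cong)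
  moreover have "(\<Prod>z\<in>Y. if z \<in> U then 1 else q) = (\<Prod>z\<in>Y - U. q)"
    using assms(1,2) by (simp add: prod.If_cases Int_absorb1 Diff_eq[symmetric] Int_commute)
  ultimately show ?thesis by simp
qed

lemma card_restrict_blocks_le:
  fixes X :: "('a \<Rightarrow> nat) set"
  assumes fin: "finite PY" "finite T" and disj: "disjoint_family_on B T"
    and X: "X \<subseteq> PiE PY (\<lambda>_. {0..<q})"
    and C: "\<And>x t. x \<in> X \<Longrightarrow> t \<in> T \<Longrightarrow> restrict x (B t) \<in> C t" "\<And>t. t \<in> T \<Longrightarrow> finite (C t)"
  shows "card X \<le> q ^ card (PY - (\<Union>t\<in>T. B t)) * (\<Prod>t\<in>T. card (C t))"
proof -
  define U where "U = (\<Union>t\<in>T. B t)"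
  define decompose where "decompose x = (restrict x (PY - U), restrict (\<lambda>t. restrict x (B t)) T)"
    for x :: "'a \<Rightarrow> nat"
  have "inj_on decompose X"
  proof (rule inj_onI)
    fix x x' assume xx: "x \<in> X" "x' \<in> X" "decompose x = decompose x'"
    then have outside: "restrict x (PY - U) = restrict x' (PY - U)"
      and blocks: "restrict (\<lambda>t. restrict x (B t)) T = restrict (\<lambda>t. restrict x' (B t)) T"
      by (simp_all add: decompose_def)
    show "x = x'"
    proof (rule PiE_ext)
      show "x \<in> PiE PY (\<lambda>_. {0..<q})" "x' \<in> PiE PY (\<lambda>_. {0..<q})" using xx X by auto
      fix w assume w: "w \<in> PY"
      show "x w = x' w"
      proof (cases "w \<in> U")
        case False
        with w fun_cong[OF outside, of w] show ?thesis by simp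
      next
        case True
        then obtain t where t: "t \<in> T" "w \<in> B t" by (auto simp: U_def)
        with fun_cong[OF fun_cong[OF blocks, of t], of w] show ?thesis by simp
      qed
    qed
  qed
  moreover have "decompose ` X \<subseteq> PiE (PY - U) (\<lambda>_. {0..<q}) \<times> PiE T C"
  proof
    fix y assume "y \<in> decompose ` X"
    then obtain x where "x \<in> X" "y = decompose x" by blast
    with X C(1) show "y \<in> PiE (PY - U) (\<lambda>_. {0..<q}) \<times> PiE T C"
      unfolding decompose_def by (auto simp: PiE_iff)
  qed
  moreover have "finite (PiE (PY - U) (\<lambda>_. {0..<q}) \<times> PiE T C)"
    using fin C(2) by (simp add: finite_PiE)
  ultimately have "card X \<le> card (PiE (PY - U) (\<lambda>_. {0..<q}) \<times> PiE T C)"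
    by (rule card_inj_on_le)
  then show ?thesis by (simp add: card_cartesian_product card_PiE fin U_def)
qed

lemma sum_card_le_card:
  assumes "finite Y" "finite T" "\<And>t. t \<in> T \<Longrightarrow> A t \<subseteq> Y" "disjoint_family_on A T"
  shows "(\<Sum>t\<in>T. card (A t)) \<le> card Y"
proof -
  have "(\<Sum>t\<in>T. card (A t)) = card (\<Union>t\<in>T. A t)"
    using assms by (intro card_UN_disjoint'[symmetric]) (auto intro: finite_subset)
  also have "\<dots> \<le> card Y" using assms by (intro card_mono) auto
  finally show ?thesis .
qed

lemma power_Suc_add_le: "(x + y) ^ Suc n \<le> x ^ Suc n + Suc n * y * (x + y) ^ n" for x y :: nat
proof (induction n)
  case (Suc n)
  have "(x + y) ^ Suc (Suc n) \<le> (x + y) * (x ^ Suc n + Suc n * y * (x + y) ^ n)"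
    using mult_left_mono[OF Suc] by simp
  also have "\<dots> = x ^ Suc (Suc n) + y * x ^ Suc n + Suc n * y * (x + y) ^ Suc n"
    by (simp add: algebra_simps)
  also have "y * x ^ Suc n \<le> y * (x + y) ^ Suc n"
    by (intro mult_left_mono power_mono) auto
  finally show ?case by (simp add: algebra_simps)
qed simp

lemma exists_mult_power_pred_less:
  assumes "1 \<le> P"
  shows "\<exists>L\<ge>1. Q * (P - 1) ^ L < (P::nat) ^ L"
proof (cases "P = 1")
  case True then show ?thesis by (intro exI[of _ 1]) simp
next
  case False
  then have P: "2 \<le> P" using assms by simp
  then have "1 < real P / real (P - 1)" by (simp add: of_nat_diff)
  from real_arch_pow[OF this] obtain n where n: "real Q < (real P / real (P - 1)) ^ n" by blast
  have "real Q * real (P - 1) ^ n < real P ^ n"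
    using n P by (simp add: power_divide pos_less_divide_eq)
  then have "Q * (P - 1) ^ n < P ^ n" by (metis of_nat_less_iff of_nat_mult of_nat_power)
  with P show ?thesis by (cases "n = 0") (auto intro: exI[of _ 1] exI[of _ n])
qed

lemma mult_power_le_of_power_diff_le:
  fixes q a b j k n c :: nat
  assumes "1 \<le> q" "q ^ (a - k * j) \<le> q ^ (b - k * n) * c ^ k" "k * j \<le> a" "k * n \<le> b"
  shows "q ^ a * (q ^ n) ^ k \<le> q ^ b * (c * q ^ j) ^ k"
proof -
  have "q ^ a * (q ^ n) ^ k = q ^ (a - k * j) * q ^ (k * j) * q ^ (k * n)"
    using assms(3) by (simp add: power_add[symmetric] power_mult[symmetric] mult.commute)
  also have "\<dots> \<le> q ^ (b - k * n) * c ^ k * q ^ (k * j) * q ^ (k * n)"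
    using assms(2) by simp
  also have "\<dots> = q ^ b * (c * q ^ j) ^ k"
    using assms(4)
    by (simp add: power_mult_distrib power_add[symmetric] power_mult[symmetric] algebra_simps)
  finally show ?thesis .
qed

text \<open>The volume term \<open>L ^ d\<close> outgrows the boundary term \<open>L ^ (d - 1)\<close>.\<close>
lemma boundary_power_less:
  fixes q d L P a b C :: nat
  assumes q: "1 \<le> q" and d: "1 \<le> d" and L: "1 \<le> L"
    and key: "q ^ C * (P - 1) ^ L < P ^ L" and b: "b \<le> a + C * L ^ (d - 1)"
  shows "q ^ b * (P - 1) ^ (L ^ d) < q ^ a * P ^ (L ^ d)"
proof -
  have Ld: "L ^ d = L * L ^ (d - 1)" using d by (metis Suc_diff_le diff_Suc_1 power_Suc)
  have "q ^ b * (P - 1) ^ (L ^ d) \<le> q ^ a * (q ^ (C * L ^ (d - 1)) * (P - 1) ^ (L ^ d))"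
    using q b by (simp add: power_add[symmetric] power_increasing)
  also have "q ^ (C * L ^ (d - 1)) * (P - 1) ^ (L ^ d) = (q ^ C * (P - 1) ^ L) ^ (L ^ (d - 1))"
    by (simp add: Ld power_mult power_mult_distrib)
  also have "\<dots> < (P ^ L) ^ (L ^ (d - 1))"
    by (rule power_strict_mono[OF key]) (use L in auto)
  also have "\<dots> = P ^ (L ^ d)" by (simp add: Ld power_mult)
  finally show ?thesis using q by simp
qed

subsection \<open>Cubes in the lattice\<close>

lemma length_vadd [simp]: "length (vadd z v) = min (length z) (length v)"
  by (simp add: vadd_def)

lemma nth_vadd: "i < length z \<Longrightarrow> i < length v \<Longrightarrow> vadd z v ! i = z ! i + v ! i"
  by (simp add: vadd_def)

lemma vadd_swap:
  "length a = length b \<Longrightarrow> length c = length b \<Longrightarrow> vadd (vadd a b) c = vadd (vadd a c) b"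
  by (rule nth_equalityI) (auto simp: nth_vadd)

lemma vadd_right_cancel:
  "length a = length v \<Longrightarrow> length b = length v \<Longrightarrow> vadd a v = vadd b v \<Longrightarrow> a = b"
  by (rule nth_equalityI) (simp, metis add_right_cancel nth_vadd)

lemma vadd_replicate_0: "length z = d \<Longrightarrow> vadd z (replicate d 0) = z"
  by (rule nth_equalityI) (auto simp: nth_vadd)

definition lattice_cube :: "nat \<Rightarrow> int \<Rightarrow> int \<Rightarrow> int list set" where
  "lattice_cube d a b = {z. set z \<subseteq> {a..<b} \<and> length z = d}"

lemma card_cube: "card (lattice_cube d a b) = nat (b - a) ^ d"
  unfolding lattice_cube_def by (simp add: card_lists_length_eq)

lemma finite_cube: "finite (lattice_cube d a b)"
  unfolding lattice_cube_def by (rule finite_lists_length_eq) simp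

lemma cube_subset_lattice: "lattice_cube d a b \<subseteq> lattice d"
  by (auto simp: lattice_cube_def lattice_def)

lemma mem_cube_iff: "z \<in> lattice_cube d a b \<longleftrightarrow> length z = d \<and> (\<forall>i<d. a \<le> z!i \<and> z!i < b)"
  unfolding lattice_cube_def by (auto simp: in_set_conv_nth subset_iff)

lemma finite_subset_cube:
  assumes "finite J" "J \<subseteq> lattice d"
  shows "\<exists>m::nat. J \<subseteq> lattice_cube d (- int m) (int m)"
proof -
  define m where "m = Max (insert 0 ((\<lambda>(z, i). nat \<bar>z!i\<bar>) ` (J \<times> {..<d}))) + 1"
  have "nat \<bar>z!i\<bar> < m" if "z \<in> J" "i < d" for z i
  proof -
    have "nat \<bar>z!i\<bar> \<le> Max (insert 0 ((\<lambda>(z, i). nat \<bar>z!i\<bar>) ` (J \<times> {..<d})))"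
      by (rule Max_ge) (use that assms(1) in auto)
    then show ?thesis unfolding m_def by simp
  qed
  then have "J \<subseteq> lattice_cube d (- int m) (int m)"
    using assms(2) by (force simp: mem_cube_iff lattice_def)
  then show ?thesis ..
qed

text \<open>Shifting by \<open>2h\<close> times a lattice vector, so that the shifts of \<open>[-h, h)\<^sup>d\<close> tile the lattice.\<close>
definition cube_shift :: "int \<Rightarrow> int list \<Rightarrow> int list \<Rightarrow> int list" where
  "cube_shift h t z = vadd z (map ((*) (2*h)) t)"

lemma cube_shift_inj:
  assumes a: "a \<in> lattice_cube d (-h) h" "a' \<in> lattice_cube d (-h) h" and t: "length t = d" "length t' = d"
    and e: "cube_shift h t a = cube_shift h t' a'"
  shows "t = t' \<and> a = a'"
proof -
  have la: "length a = d" "length a' = d" using a by (auto simp: mem_cube_iff)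
  have "t!i = t'!i" if i: "i < d" for i
  proof -
    have "a!i + 2*h*t!i = a'!i + 2*h*t'!i"
      using arg_cong[OF e, of "\<lambda>w. w!i"] i t la by (simp add: cube_shift_def nth_vadd)
    then have diff: "2*h*(t!i - t'!i) = a'!i - a!i" by (simp add: algebra_simps)
    have bounds: "-h \<le> a!i" "a!i < h" "-h \<le> a'!i" "a'!i < h" using a i by (auto simp: mem_cube_iff)
    show ?thesis
    proof (rule ccontr)
      assume "t!i \<noteq> t'!i"
      then have "2*h*1 \<le> 2*h*\<bar>t!i - t'!i\<bar>" using bounds by (intro mult_left_mono) auto
      also have "\<dots> = \<bar>a'!i - a!i\<bar>" using diff bounds by (simp add: abs_mult flip: diff)
      finally show False using bounds by linarith
    qed
  qed
  then have "t = t'" using t by (simp add: nth_equalityI)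
  with e la t show ?thesis unfolding cube_shift_def by (metis length_map vadd_right_cancel)
qed

lemma disjoint_family_on_cube_shift:
  assumes "A \<subseteq> lattice_cube d (-h) h"
  shows "disjoint_family_on (\<lambda>t. cube_shift h t ` A) (lattice_cube d 0 L)"
  unfolding disjoint_family_on_def
proof (intro ballI impI)
  fix t t' assume t: "t \<in> lattice_cube d 0 L" "t' \<in> lattice_cube d 0 L" "t \<noteq> t'"
  then have "length t = d" "length t' = d" by (auto simp: mem_cube_iff)
  with t(3) assms show "cube_shift h t ` A \<inter> cube_shift h t' ` A = {}"
    using cube_shift_inj[of _ d h _ t t'] by blast
qed

lemma card_cube_shift_image:
  assumes "A \<subseteq> lattice_cube d (-h) h" "t \<in> lattice_cube d 0 L"
  shows "card (cube_shift h t ` A) = card A"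
proof (rule card_image, rule inj_onI)
  fix a a' assume "a \<in> A" "a' \<in> A" "cube_shift h t a = cube_shift h t a'"
  moreover have "length t = d" using assms(2) by (simp add: mem_cube_iff)
  ultimately show "a = a'" using cube_shift_inj[of a d h a' t t] assms(1) by blast
qed

lemma cube_shift_mem:
  assumes a: "a \<in> lattice_cube d (-h) h" and t: "t \<in> lattice_cube d 0 (int L)" and h: "0 < h"
  shows "cube_shift h t a \<in> lattice_cube d (-h) (2*h*int L - h)"
  unfolding mem_cube_iff
proof (intro conjI allI impI)
  show "length (cube_shift h t a) = d" using a t by (simp add: mem_cube_iff cube_shift_def)
  fix i assume i: "i < d"
  have "0 \<le> t!i" "t!i \<le> int L - 1" using t i by (auto simp: mem_cube_iff)
  then have "0 \<le> 2*h*t!i" "2*h*t!i \<le> 2*h*(int L - 1)" using h by (auto intro: mult_left_mono)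
  moreover have "-h \<le> a!i" "a!i < h" using a i by (auto simp: mem_cube_iff)
  moreover have "cube_shift h t a ! i = a!i + 2*h*t!i"
    using a t i by (simp add: mem_cube_iff nth_vadd cube_shift_def)
  ultimately show "-h \<le> cube_shift h t a ! i" "cube_shift h t a ! i < 2*h*int L - h"
    by (simp_all add: algebra_simps)
qed

lemma cube_mono: "a' \<le> a \<Longrightarrow> b \<le> b' \<Longrightarrow> lattice_cube d a b \<subseteq> lattice_cube d a' b'"
  by (auto simp: lattice_cube_def)

subsection \<open>Cylinders in the product of discrete spaces\<close>

lemma openin_cylinder:
  assumes "finite D"
  shows "openin (product_topology (\<lambda>_. discrete_topology A) I)
           {s \<in> topspace (product_topology (\<lambda>_. discrete_topology A) I). restrict s D \<in> Q}"
  unfolding openin_product_topology_alt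
proof (intro ballI)
  fix x assume x: "x \<in> {s \<in> topspace (product_topology (\<lambda>_. discrete_topology A) I). restrict s D \<in> Q}"
  define U where "U i = (if i \<in> D then {x i} else A)" for i
  show "\<exists>U. finite {i \<in> I. U i \<noteq> topspace (discrete_topology A)} \<and>
          (\<forall>i\<in>I. openin (discrete_topology A) (U i)) \<and> x \<in> PiE I U \<and>
          PiE I U \<subseteq> {s \<in> topspace (product_topology (\<lambda>_. discrete_topology A) I). restrict s D \<in> Q}"
  proof (intro exI[of _ U] conjI)
    show "finite {i \<in> I. U i \<noteq> topspace (discrete_topology A)}"
      by (rule finite_subset[OF _ assms]) (auto simp: U_def)
    show "\<forall>i\<in>I. openin (discrete_topology A) (U i)" "x \<in> PiE I U"
      using x by (auto simp: U_def PiE_iff)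
    show "PiE I U \<subseteq> {s \<in> topspace (product_topology (\<lambda>_. discrete_topology A) I). restrict s D \<in> Q}"
    proof safe
      fix s assume s: "s \<in> PiE I U"
      then show "s \<in> topspace (product_topology (\<lambda>_. discrete_topology A) I)"
        using x by (auto simp: U_def PiE_iff split: if_splits)
      have "s i = x i" if "i \<in> D" for i
      proof (cases "i \<in> I")
        case True
        with s that show ?thesis by (auto simp: U_def dest: PiE_mem)
      next
        case False
        with s x show ?thesis by (auto simp: PiE_def extensional_def)
      qed
      then have "restrict s D = restrict x D" by auto
      then show "restrict s D \<in> Q" using x by simp
    qed
  qed
qed

lemma closedin_cylinder:
  assumes "finite D"
  shows "closedin (product_topology (\<lambda>_. discrete_topology A) I)
           {s \<in> topspace (product_topology (\<lambda>_. discrete_topology A) I). restrict s D \<in> Q}"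
proof -
  let ?X = "product_topology (\<lambda>_. discrete_topology A) I"
  have "topspace ?X - {s \<in> topspace ?X. restrict s D \<in> Q} = {s \<in> topspace ?X. restrict s D \<in> - Q}"
    by auto
  then show ?thesis unfolding closedin_def using openin_cylinder[OF assms, of A I "- Q"] by auto
qed

subsection \<open>Balance of surjective cellular automata\<close>

locale cellular_automaton =
  fixes d q :: nat and V :: "int list list" and tab :: "(nat list \<times> nat) list"
  assumes valid: "dca_valid d (q, V, tab)"
begin

abbreviation F :: "(int list \<Rightarrow> nat) \<Rightarrow> int list \<Rightarrow> nat" where
  "F \<equiv> dca_global d (q, V, tab)"

text \<open>The value of \<open>F s\<close> at \<open>z\<close>, meaningful also for patterns \<open>s\<close> given only on a neighbourhood.\<close>
definition cell :: "(int list \<Rightarrow> nat) \<Rightarrow> int list \<Rightarrow> nat" where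
  "cell s z = the (map_of tab (map (\<lambda>v. s (vadd z v)) V))"

definition nbhd :: "int list set \<Rightarrow> int list set" where
  "nbhd J = (\<lambda>(z, v). vadd z v) ` (J \<times> set V)"

definition preimages :: "int list set \<Rightarrow> (int list \<Rightarrow> nat) \<Rightarrow> (int list \<Rightarrow> nat) set" where
  "preimages J p = {x \<in> PiE (nbhd J) (\<lambda>_. {0..<q}). \<forall>z\<in>J. cell x z = p z}"

definition surjective :: bool where
  "surjective \<longleftrightarrow> F ` configs d {0..<q} = configs d {0..<q}"

definition radius :: nat where
  "radius = Max (insert 0 ((\<lambda>(v, i). nat \<bar>v!i\<bar>) ` (set V \<times> {..<d})))"

lemma q_pos: "1 \<le> q"
  using valid by (simp add: dca_valid_def)

lemma length_neighbour: "v \<in> set V \<Longrightarrow> length v = d"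
  using valid by (simp add: dca_valid_def)

lemma abs_neighbour_le_radius:
  assumes "v \<in> set V" "i < d"
  shows "\<bar>v!i\<bar> \<le> int radius"
proof -
  have "nat \<bar>v!i\<bar> \<le> radius" unfolding radius_def by (rule Max_ge) (use assms in auto)
  then show ?thesis by simp
qed

lemma dca_global_eq: "F s = restrict (cell s) (lattice d)"
  unfolding dca_global_def cell_def[abs_def] by simp

lemma mem_nbhd_iff: "w \<in> nbhd J \<longleftrightarrow> (\<exists>z\<in>J. \<exists>v\<in>set V. w = vadd z v)"
  by (auto simp: nbhd_def)

lemma cell_cong:
  assumes "z \<in> J" "\<And>w. w \<in> nbhd J \<Longrightarrow> x w = y w"
  shows "cell x z = cell y z"
proof -
  have "map (\<lambda>v. x (vadd z v)) V = map (\<lambda>v. y (vadd z v)) V"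
    using assms by (auto simp: mem_nbhd_iff)
  then show ?thesis unfolding cell_def by (rule arg_cong)
qed

lemma cell_restrict_nbhd: "z \<in> J \<Longrightarrow> cell (restrict x (nbhd J)) z = cell x z"
  by (rule cell_cong) auto

lemma cell_less:
  assumes "z \<in> lattice d" "\<And>v. v \<in> set V \<Longrightarrow> s (vadd z v) < q"
  shows "cell s z < q"
proof -
  let ?u = "map (\<lambda>v. s (vadd z v)) V"
  have "length ?u = length V \<and> set ?u \<subseteq> {0..<q}" using assms by auto
  with valid obtain a where "a \<in> {0..<q}" "map_of tab ?u = Some a"
    unfolding dca_valid_def by blast
  then show ?thesis by (simp add: cell_def)
qed

lemma nbhd_subset_lattice: "J \<subseteq> lattice d \<Longrightarrow> nbhd J \<subseteq> lattice d"
  by (auto simp: nbhd_def lattice_def length_neighbour)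

lemma finite_nbhd: "finite J \<Longrightarrow> finite (nbhd J)"
  by (simp add: nbhd_def)

lemma nbhd_mono: "J \<subseteq> K \<Longrightarrow> nbhd J \<subseteq> nbhd K"
  by (auto simp: nbhd_def)

lemma cell_less_PiE:
  assumes "z \<in> J" "J \<subseteq> lattice d" "x \<in> PiE (nbhd J) (\<lambda>_. {0..<q})"
  shows "cell x z < q"
proof (rule cell_less)
  show "z \<in> lattice d" using assms by auto
  fix v assume "v \<in> set V"
  then have "vadd z v \<in> nbhd J" using assms(1) by (auto simp: mem_nbhd_iff)
  then show "x (vadd z v) < q" using assms(3) by auto
qed

lemma finite_preimages: "finite J \<Longrightarrow> finite (preimages J p)"
  unfolding preimages_def by (rule finite_subset[of _ "PiE (nbhd J) (\<lambda>_. {0..<q})"])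
    (auto intro: finite_PiE finite_nbhd)

lemma nbhd_subset_cube: "J \<subseteq> lattice_cube d a b \<Longrightarrow> nbhd J \<subseteq> lattice_cube d (a - radius) (b + radius)"
proof
  fix w assume J: "J \<subseteq> lattice_cube d a b" and "w \<in> nbhd J"
  then obtain z v where zv: "z \<in> lattice_cube d a b" "v \<in> set V" "w = vadd z v" by (auto simp: mem_nbhd_iff)
  show "w \<in> lattice_cube d (a - radius) (b + radius)" unfolding mem_cube_iff
  proof (intro conjI allI impI)
    show "length w = d" using zv length_neighbour by (simp add: mem_cube_iff)
    fix i assume i: "i < d"
    have "w!i = z!i + v!i" "a \<le> z!i" "z!i < b"
      using zv length_neighbour i by (auto simp: nth_vadd mem_cube_iff)
    then show "a - radius \<le> w!i" "w!i < b + radius"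
      using abs_neighbour_le_radius[OF zv(2) i] by auto
  qed
qed

lemma card_nbhd_cube_le:
  assumes "1 \<le> d" "a \<le> b"
  shows "card (nbhd (lattice_cube d a b)) \<le> nat (b - a) ^ d + d * (2 * radius) * (nat (b - a) + 2 * radius) ^ (d - 1)"
proof -
  have "card (nbhd (lattice_cube d a b)) \<le> card (lattice_cube d (a - radius) (b + radius))"
    by (rule card_mono[OF finite_cube nbhd_subset_cube]) simp
  also have "\<dots> = (nat (b - a) + 2 * radius) ^ Suc (d - 1)"
  proof -
    have "nat (b + int radius - (a - int radius)) = nat (b - a) + 2 * radius"
      using assms(2) by (simp add: nat_eq_iff)
    then show ?thesis using assms(1) by (simp add: card_cube)
  qed
  also have "\<dots> \<le> nat (b - a) ^ Suc (d - 1) + Suc (d - 1) * (2 * radius) * (nat (b - a) + 2 * radius) ^ (d - 1)"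
    by (rule power_Suc_add_le)
  finally show ?thesis using assms(1) by simp
qed

lemma surjective_local:
  assumes surj: surjective and Y: "Y \<subseteq> lattice d" and y: "y \<in> PiE Y (\<lambda>_. {0..<q})"
  shows "\<exists>x\<in>PiE (nbhd Y) (\<lambda>_. {0..<q}). \<forall>z\<in>Y. cell x z = y z"
proof -
  define ye where "ye = restrict (\<lambda>z. if z \<in> Y then y z else 0) (lattice d)"
  have "ye \<in> configs d {0..<q}" using y q_pos by (auto simp: ye_def configs_def PiE_iff)
  with surj obtain s where s: "s \<in> configs d {0..<q}" "F s = ye"
    unfolding surjective_def by (metis imageE)
  show ?thesis
  proof (intro bexI ballI)
    show "restrict s (nbhd Y) \<in> PiE (nbhd Y) (\<lambda>_. {0..<q})"
      using s(1) nbhd_subset_lattice[OF Y] by (auto simp: configs_def)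
    fix z assume z: "z \<in> Y"
    then have "cell s z = y z"
      using fun_cong[OF s(2), of z] Y by (auto simp: dca_global_eq ye_def)
    with z show "cell (restrict s (nbhd Y)) z = y z" by (simp add: cell_restrict_nbhd)
  qed
qed

lemma nbhd_translate:
  assumes "J \<subseteq> lattice d" "length u = d"
  shows "nbhd ((\<lambda>z. vadd z u) ` J) = (\<lambda>w. vadd w u) ` nbhd J"
proof -
  have "vadd (vadd z u) v = vadd (vadd z v) u" if "z \<in> J" "v \<in> set V" for z v
    using assms that length_neighbour by (intro vadd_swap) (auto simp: lattice_def)
  then show ?thesis unfolding nbhd_def by (auto simp: image_iff) (metis)+
qed

lemma cell_translate:
  assumes "z \<in> lattice d" "length u = d"
  shows "cell x (vadd z u) = cell (\<lambda>w. x (vadd w u)) z"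
proof -
  have "vadd (vadd z u) v = vadd (vadd z v) u" if "v \<in> set V" for v
    using assms that length_neighbour by (intro vadd_swap) (auto simp: lattice_def)
  then have "map (\<lambda>v. x (vadd (vadd z u) v)) V = map (\<lambda>v. x (vadd (vadd z v) u)) V" by simp
  then show ?thesis unfolding cell_def by (rule arg_cong)
qed

lemma card_preimages_translate_le:
  assumes J: "J \<subseteq> lattice d" "finite J" and u: "length u = d"
    and P: "\<And>z. z \<in> J \<Longrightarrow> P (vadd z u) = p z"
  shows "card (preimages ((\<lambda>z. vadd z u) ` J) P) \<le> card (preimages J p)"
proof -
  define shift where "shift x = restrict (\<lambda>w. x (vadd w u)) (nbhd J)" for x :: "int list \<Rightarrow> nat"
  have nbhd_eq: "nbhd ((\<lambda>z. vadd z u) ` J) = (\<lambda>w. vadd w u) ` nbhd J"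
    by (rule nbhd_translate[OF J(1) u])
  have "inj_on shift (preimages ((\<lambda>z. vadd z u) ` J) P)"
  proof (rule inj_onI)
    fix x x' assume xx: "x \<in> preimages ((\<lambda>z. vadd z u) ` J) P"
      "x' \<in> preimages ((\<lambda>z. vadd z u) ` J) P" "shift x = shift x'"
    show "x = x'"
    proof (rule PiE_ext)
      show "x \<in> PiE (nbhd ((\<lambda>z. vadd z u) ` J)) (\<lambda>_. {0..<q})"
           "x' \<in> PiE (nbhd ((\<lambda>z. vadd z u) ` J)) (\<lambda>_. {0..<q})" using xx by (auto simp: preimages_def)
      fix w' assume "w' \<in> nbhd ((\<lambda>z. vadd z u) ` J)"
      then obtain w where "w \<in> nbhd J" "w' = vadd w u" using nbhd_eq by auto
      with fun_cong[OF xx(3), of w] show "x w' = x' w'" by (simp add: shift_def)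
    qed
  qed
  moreover have "shift ` preimages ((\<lambda>z. vadd z u) ` J) P \<subseteq> preimages J p"
  proof safe
    fix x assume x: "x \<in> preimages ((\<lambda>z. vadd z u) ` J) P"
    have "cell (shift x) z = p z" if z: "z \<in> J" for z
    proof -
      have "cell (shift x) z = cell x (vadd z u)"
        unfolding shift_def using z J u by (simp add: cell_restrict_nbhd cell_translate subsetD)
      also have "\<dots> = p z" using x z P by (auto simp: preimages_def)
      finally show ?thesis .
    qed
    with x show "shift x \<in> preimages J p" by (auto simp: preimages_def shift_def nbhd_eq)
  qed
  ultimately show ?thesis by (rule card_inj_on_le[OF _ _ finite_preimages[OF J(2)]])
qed

text \<open>Every pattern on \<open>Y\<close> that agrees with \<open>P\<close> on the blocks has a preimage, and preimages
  are counted block by block.\<close>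
lemma card_preimages_blocks:
  assumes surj: surjective and Y: "finite Y" "Y \<subseteq> lattice d" and T: "finite T"
    and J: "\<And>t. t \<in> T \<Longrightarrow> J t \<subseteq> Y" "disjoint_family_on J T" "disjoint_family_on (\<lambda>t. nbhd (J t)) T"
    and P: "\<And>t z. t \<in> T \<Longrightarrow> z \<in> J t \<Longrightarrow> P z < q"
    and c: "\<And>t. t \<in> T \<Longrightarrow> card (preimages (J t) P) \<le> c"
  shows "q ^ (card Y - (\<Sum>t\<in>T. card (J t))) \<le>
         q ^ (card (nbhd Y) - (\<Sum>t\<in>T. card (nbhd (J t)))) * c ^ card T"
proof -
  define U where "U = (\<Union>t\<in>T. J t)"
  define S where "S = {y \<in> PiE Y (\<lambda>_. {0..<q}). \<forall>z\<in>U. y z = P z}"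
  define Pre where "Pre = {x \<in> PiE (nbhd Y) (\<lambda>_. {0..<q}). \<forall>z\<in>U. cell x z = P z}"
  have finJ: "finite (J t)" if "t \<in> T" for t using J(1)[OF that] Y(1) by (rule finite_subset)
  have "card S = q ^ (card Y - card U)"
    unfolding S_def using card_PiE_fixed_on[OF Y(1), of U P q] J(1) P Y(1)
    by (auto simp: U_def card_Diff_subset finite_subset)
  also have "card U = (\<Sum>t\<in>T. card (J t))"
    unfolding U_def by (rule card_UN_disjoint'[OF J(2) finJ T])
  finally have cS: "card S = q ^ (card Y - (\<Sum>t\<in>T. card (J t)))" .
  have "S \<subseteq> (\<lambda>x. restrict (cell x) Y) ` Pre"
  proof
    fix y assume y: "y \<in> S"
    then have "y \<in> PiE Y (\<lambda>_. {0..<q})" by (simp add: S_def)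
    then obtain x where x: "x \<in> PiE (nbhd Y) (\<lambda>_. {0..<q})" "\<forall>z\<in>Y. cell x z = y z"
      using surjective_local[OF surj Y(2)] by blast
    have "restrict (cell x) Y = y" using x(2) y by (auto simp: S_def PiE_iff extensional_def)
    moreover have "x \<in> Pre" using x y J(1) by (fastforce simp: Pre_def S_def U_def)
    ultimately show "y \<in> (\<lambda>x. restrict (cell x) Y) ` Pre" by blast
  qed
  then have "card S \<le> card Pre"
    by (rule surj_card_le[rotated])
       (auto simp: Pre_def intro: finite_subset[OF _ finite_PiE[OF finite_nbhd[OF Y(1)]]])
  also have "card Pre \<le> q ^ card (nbhd Y - (\<Union>t\<in>T. nbhd (J t))) * (\<Prod>t\<in>T. card (preimages (J t) P))"
  proof (rule card_restrict_blocks_le[OF finite_nbhd[OF Y(1)] T J(3)])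
    show "Pre \<subseteq> PiE (nbhd Y) (\<lambda>_. {0..<q})" by (auto simp: Pre_def)
    fix x t assume x: "x \<in> Pre" and t: "t \<in> T"
    then have "cell (restrict x (nbhd (J t))) z = P z" if "z \<in> J t" for z
      using that by (auto simp: cell_restrict_nbhd Pre_def U_def)
    then show "restrict x (nbhd (J t)) \<in> preimages (J t) P"
      using x nbhd_mono[OF J(1)[OF t]] by (auto simp: preimages_def Pre_def)
  qed (use finite_preimages finJ in blast)
  also have "(\<Prod>t\<in>T. card (preimages (J t) P)) \<le> c ^ card T"
    using prod_mono[of T "\<lambda>t. card (preimages (J t) P)" "\<lambda>_. c"] c by simp
  also have "card (nbhd Y - (\<Union>t\<in>T. nbhd (J t))) = card (nbhd Y) - (\<Sum>t\<in>T. card (nbhd (J t)))"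
  proof -
    have "(\<Union>t\<in>T. nbhd (J t)) \<subseteq> nbhd Y" using J(1) nbhd_mono by blast
    with T finite_nbhd[OF finJ] show ?thesis
      by (simp add: card_Diff_subset card_UN_disjoint'[OF J(3) _ T] finite_nbhd[OF finJ])
  qed
  finally show ?thesis using cS by simp
qed

text \<open>Count preimages of the pattern obtained by repeating \<open>p\<close> on \<open>L\<^sup>d\<close> disjoint translates of \<open>J\<close>
  inside a box \<open>Y\<close> of side \<open>2hL\<close>.\<close>
lemma card_preimages_translates:
  fixes L :: nat
  assumes surj: surjective and J: "finite J" "J \<subseteq> lattice_cube d (-h) h" "nbhd J \<subseteq> lattice_cube d (-h) h"
    and p: "p \<in> PiE J (\<lambda>_. {0..<q})" and h: "0 < h"
  defines "Y \<equiv> lattice_cube d (-h) (2*h*int L - h)"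
  shows "q ^ card Y * (q ^ card (nbhd J)) ^ (L ^ d) \<le>
         q ^ card (nbhd Y) * (card (preimages J p) * q ^ card J) ^ (L ^ d)"
proof -
  define T where "T = lattice_cube d 0 (int L)"
  have T_len: "length (map ((*) (2*h)) t) = d" if "t \<in> T" for t
    using that by (simp add: T_def mem_cube_iff)
  have nbhd_shift: "nbhd (cube_shift h t ` J) = cube_shift h t ` nbhd J" if "t \<in> T" for t
    unfolding cube_shift_def[abs_def] using nbhd_translate J(2) cube_subset_lattice T_len[OF that] by blast
  define P where "P w = p (snd (inv_into (T \<times> J) (\<lambda>(t, z). cube_shift h t z) w))" for w
  have P: "P (cube_shift h t z) = p z" if "t \<in> T" "z \<in> J" for t z
  proof -
    have "inj_on (\<lambda>(t, z). cube_shift h t z) (T \<times> J)"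
    proof (rule inj_onI, clarify)
      fix t z t' z' assume tz: "t \<in> T" "z \<in> J" "t' \<in> T" "z' \<in> J" "cube_shift h t z = cube_shift h t' z'"
      then have "length t = d" "length t' = d" by (auto simp: T_def mem_cube_iff)
      with tz J(2) show "t = t' \<and> z = z'" using cube_shift_inj[of z d h z' t t'] by blast
    qed
    with that show ?thesis unfolding P_def by (metis (no_types) inv_into_f_f case_prod_conv mem_Sigma_iff snd_conv)
  qed
  have Y: "finite Y" "Y \<subseteq> lattice d" "finite T"
    unfolding Y_def T_def by (rule finite_cube cube_subset_lattice)+
  have sub: "cube_shift h t ` J \<subseteq> Y" if "t \<in> T" for t
    using cube_shift_mem[OF _ _ h] J(2) that by (auto simp: Y_def T_def)
  have disjJ: "disjoint_family_on (\<lambda>t. cube_shift h t ` J) T"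
    unfolding T_def by (rule disjoint_family_on_cube_shift[OF J(2)])
  have disjN: "disjoint_family_on (\<lambda>t. nbhd (cube_shift h t ` J)) T"
    using disjoint_family_on_cube_shift[OF J(3)] by (simp add: T_def nbhd_shift disjoint_family_on_def)
  have "q ^ (card Y - (\<Sum>t\<in>T. card (cube_shift h t ` J))) \<le>
        q ^ (card (nbhd Y) - (\<Sum>t\<in>T. card (nbhd (cube_shift h t ` J)))) * card (preimages J p) ^ card T"
  proof (rule card_preimages_blocks[OF surj Y sub disjJ disjN])
    show "P z < q" if "t \<in> T" "z \<in> cube_shift h t ` J" for t z using that P p by auto
    show "card (preimages (cube_shift h t ` J) P) \<le> card (preimages J p)" if "t \<in> T" for t
      using card_preimages_translate_le[OF subset_trans[OF J(2) cube_subset_lattice] J(1) T_len[OF that]]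
        P[OF that] by (simp add: cube_shift_def[abs_def])
  qed
  moreover have "card T = L ^ d" by (simp add: T_def card_cube)
  moreover have "(\<Sum>t\<in>T. card (cube_shift h t ` J)) = L ^ d * card J"
    "(\<Sum>t\<in>T. card (nbhd (cube_shift h t ` J))) = L ^ d * card (nbhd J)"
    using card_cube_shift_image J(2,3) \<open>card T = L ^ d\<close> by (simp_all add: T_def nbhd_shift)
  moreover have "(\<Sum>t\<in>T. card (cube_shift h t ` J)) \<le> card Y"
    using sum_card_le_card[OF Y(1) Y(3) sub disjJ] .
  moreover have "(\<Sum>t\<in>T. card (nbhd (cube_shift h t ` J))) \<le> card (nbhd Y)"
    using sum_card_le_card[OF finite_nbhd[OF Y(1)] Y(3) nbhd_mono[OF sub] disjN] .
  ultimately show ?thesis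
    by (intro mult_power_le_of_power_diff_le[OF q_pos]) (simp_all add: mult.commute)
qed

lemma card_preimages_ge:
  assumes d: "1 \<le> d" and surj: surjective and J: "finite J" "J \<subseteq> lattice d"
    and p: "p \<in> PiE J (\<lambda>_. {0..<q})"
  shows "q ^ card (nbhd J) \<le> card (preimages J p) * q ^ card J"
proof (rule ccontr)
  define P where "P = q ^ card (nbhd J)"
  define c where "c = card (preimages J p)"
  assume "\<not> ?thesis"
  then have deficit: "c * q ^ card J \<le> P - 1" by (simp add: P_def c_def)
  obtain m :: nat where m: "J \<subseteq> lattice_cube d (- int m) (int m)" using finite_subset_cube[OF J] by blast
  define n where "n = m + radius + 1"
  have Jn: "J \<subseteq> lattice_cube d (- int n) (int n)" "nbhd J \<subseteq> lattice_cube d (- int n) (int n)"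
    by (rule subset_trans[OF m cube_mono] subset_trans[OF nbhd_subset_cube[OF m] cube_mono];
        simp add: n_def)+
  define C where "C = d * (2 * radius) * (2 * n + 2 * radius) ^ (d - 1)"
  obtain L where L: "1 \<le> L" "q ^ C * (P - 1) ^ L < P ^ L"
    using exists_mult_power_pred_less[of P "q ^ C"] q_pos by (auto simp: P_def)
  define Y where "Y = lattice_cube d (- int n) (2 * int n * int L - int n)"
  have side: "nat (2 * int n * int L - int n - (- int n)) = 2 * n * L"
    by (simp add: nat_mult_distrib)
  have "card (nbhd Y) \<le> (2 * n * L) ^ d + d * (2 * radius) * (2 * n * L + 2 * radius) ^ (d - 1)"
    using card_nbhd_cube_le[OF d, of "- int n" "2 * int n * int L - int n"] L(1)
    unfolding Y_def side by simp
  also have "(2 * n * L + 2 * radius) ^ (d - 1) \<le> ((2 * n + 2 * radius) * L) ^ (d - 1)"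
    by (intro power_mono) (use L(1) in \<open>simp_all add: algebra_simps\<close>)
  also have "\<dots> = (2 * n + 2 * radius) ^ (d - 1) * L ^ (d - 1)"
    by (simp add: power_mult_distrib)
  finally have boundary: "card (nbhd Y) \<le> card Y + C * L ^ (d - 1)"
    unfolding C_def Y_def card_cube side by (simp add: mult.assoc)
  have "q ^ card Y * P ^ (L ^ d) \<le> q ^ card (nbhd Y) * (c * q ^ card J) ^ (L ^ d)"
    unfolding P_def c_def Y_def by (rule card_preimages_translates[OF surj J(1) Jn p]) (simp add: n_def)
  also have "\<dots> \<le> q ^ card (nbhd Y) * (P - 1) ^ (L ^ d)"
    by (intro mult_left_mono power_mono deficit) auto
  also have "\<dots> < q ^ card Y * P ^ (L ^ d)"
    by (rule boundary_power_less[OF q_pos d L boundary])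
  finally show False by simp
qed

lemma card_PiE_nbhd_eq_sum:
  assumes J: "finite J" "J \<subseteq> lattice d"
  shows "card (PiE (nbhd J) (\<lambda>_. {0..<q})) = (\<Sum>p\<in>PiE J (\<lambda>_. {0..<q}). card (preimages J p))"
proof -
  let ?Q = "PiE J (\<lambda>_. {0..<q})"
  have "PiE (nbhd J) (\<lambda>_. {0..<q}) = (\<Union>p\<in>?Q. preimages J p)"
  proof
    show "PiE (nbhd J) (\<lambda>_. {0..<q}) \<subseteq> (\<Union>p\<in>?Q. preimages J p)"
    proof
      fix x assume x: "x \<in> PiE (nbhd J) (\<lambda>_. {0..<q})"
      then have "restrict (cell x) J \<in> ?Q" using cell_less_PiE[OF _ J(2)] by auto
      moreover have "x \<in> preimages J (restrict (cell x) J)" using x by (simp add: preimages_def)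
      ultimately show "x \<in> (\<Union>p\<in>?Q. preimages J p)" by blast
    qed
  qed (auto simp: preimages_def)
  moreover have "disjoint_family_on (preimages J) ?Q"
    unfolding disjoint_family_on_def
  proof (intro ballI impI)
    fix p1 p2 assume "p1 \<in> ?Q" "p2 \<in> ?Q" "p1 \<noteq> p2"
    then obtain z where "z \<in> J" "p1 z \<noteq> p2 z" by (metis PiE_ext)
    then show "preimages J p1 \<inter> preimages J p2 = {}" by (auto simp: preimages_def)
  qed
  moreover have "finite ?Q" by (rule finite_PiE[OF J(1)]) simp
  ultimately show ?thesis
    using card_UN_disjoint'[of "preimages J" ?Q] finite_preimages[OF J(1)] by simp
qed

text \<open>Hedlund's balance theorem. If some pattern had more preimages than the average
  \<open>q ^ (card (nbhd J) - card J)\<close>, another would have fewer, contradicting \<open>card_preimages_ge\<close>.\<close>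
lemma card_preimages_eq:
  assumes d: "1 \<le> d" and surj: surjective and J: "finite J" "J \<subseteq> lattice d"
    and p: "p \<in> PiE J (\<lambda>_. {0..<q})"
  shows "card (preimages J p) * q ^ card J = q ^ card (nbhd J)"
proof (rule ccontr)
  let ?Q = "PiE J (\<lambda>_. {0..<q})"
  have ge: "q ^ card (nbhd J) \<le> card (preimages J p') * q ^ card J" if "p' \<in> ?Q" for p'
    by (rule card_preimages_ge[OF d surj J that])
  assume "card (preimages J p) * q ^ card J \<noteq> q ^ card (nbhd J)"
  with ge[OF p] have "q ^ card (nbhd J) < card (preimages J p) * q ^ card J" by linarith
  with ge p have "(\<Sum>p'\<in>?Q. q ^ card (nbhd J)) < (\<Sum>p'\<in>?Q. card (preimages J p') * q ^ card J)"
    by (intro sum_strict_mono_ex1[OF finite_PiE[OF J(1)]]) blast+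
  also have "\<dots> = card (PiE (nbhd J) (\<lambda>_. {0..<q})) * q ^ card J"
    by (simp only: card_PiE_nbhd_eq_sum[OF J] sum_distrib_right)
  also have "\<dots> = (\<Sum>p'\<in>?Q. q ^ card (nbhd J))"
    by (simp add: card_PiE J(1) finite_nbhd)
  finally show False by simp
qed

lemma closedin_matching_window:
  assumes "finite W"
  shows "closedin (product_topology (\<lambda>_. discrete_topology {0..<q}) (lattice d))
    {s \<in> topspace (product_topology (\<lambda>_. discrete_topology {0..<q}) (lattice d)). \<forall>z\<in>W. cell s z = y z}"
proof -
  have eq: "{s \<in> topspace (product_topology (\<lambda>_. discrete_topology {0..<q}) (lattice d)). \<forall>z\<in>W. cell s z = y z} =
    {s \<in> topspace (product_topology (\<lambda>_. discrete_topology {0..<q}) (lattice d)).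
      restrict s (nbhd W) \<in> {x. \<forall>z\<in>W. cell x z = y z}}"
    by (auto simp: cell_restrict_nbhd)
  show ?thesis unfolding eq by (rule closedin_cylinder[OF finite_nbhd[OF assms]])
qed

text \<open>By compactness of the configuration space.\<close>
lemma in_image_if_windows_in_image:
  assumes y: "y \<in> configs d {0..<q}"
    and windows: "\<And>W. finite W \<Longrightarrow> W \<subseteq> lattice d \<Longrightarrow> \<exists>s\<in>configs d {0..<q}. \<forall>z\<in>W. cell s z = y z"
  shows "y \<in> F ` configs d {0..<q}"
proof -
  let ?X = "product_topology (\<lambda>_. discrete_topology {0..<q}) (lattice d)"
  have top: "topspace ?X = configs d {0..<q}" by (simp add: configs_def)
  define K where "K W = {s \<in> topspace ?X. \<forall>z\<in>W. cell s z = y z}" for W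
  define \<W> where "\<W> = {W. finite W \<and> W \<subseteq> lattice d}"
  have closed: "\<forall>C\<in>K ` \<W>. closedin ?X C"
    unfolding K_def \<W>_def by (blast intro: closedin_matching_window)
  have fip: "\<forall>\<F>. finite \<F> \<and> \<F> \<subseteq> K ` \<W> \<longrightarrow> \<Inter>\<F> \<noteq> {}"
  proof safe
    fix \<F> assume \<F>: "finite \<F>" "\<F> \<subseteq> K ` \<W>" "\<Inter>\<F> = {}"
    obtain \<V> where \<V>: "\<V> \<subseteq> \<W>" "finite \<V>" "\<F> = K ` \<V>"
      using finite_subset_image[OF \<F>(1,2)] by blast
    then have "finite (\<Union>\<V>)" "\<Union>\<V> \<subseteq> lattice d" by (auto simp: \<W>_def)
    then obtain s where s: "s \<in> configs d {0..<q}" "\<forall>z\<in>\<Union>\<V>. cell s z = y z"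
      using windows by blast
    have "s \<in> K W" if "W \<in> \<V>" for W using s that unfolding K_def top by simp
    then have "s \<in> \<Inter>\<F>" by (simp add: \<V>(3))
    with \<F>(3) show False by simp
  qed
  have "compact_space ?X"
    by (simp add: compact_space_product_topology compact_space_discrete_topology)
  then have "\<Inter>(K ` \<W>) \<noteq> {}" unfolding compact_space_fip using closed fip by blast
  then obtain s where s: "s \<in> \<Inter>(K ` \<W>)" by blast
  have sK: "s \<in> K W" if "finite W" "W \<subseteq> lattice d" for W using s that unfolding \<W>_def by blast
  have "s \<in> configs d {0..<q}" using sK[of "{}"] by (simp add: K_def configs_def)
  moreover have "F s = y"
  proof
    fix z show "F s z = y z"
    proof (cases "z \<in> lattice d")
      case True
      then show ?thesis using sK[of "{z}"] by (simp add: K_def dca_global_eq)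
    next
      case False
      then show ?thesis using y by (simp add: dca_global_eq configs_def PiE_def extensional_def)
    qed
  qed
  ultimately show ?thesis by blast
qed

end

subsection \<open>Surjective cellular automata preserve the uniform measure\<close>

context cellular_automaton
begin

abbreviation uniform_symbols :: "nat measure" where
  "uniform_symbols \<equiv> uniform_count_measure {0..<q}"

definition bernoulli :: "(int list \<Rightarrow> nat) measure" where
  "bernoulli = bernoulli_unif d q"

definition config_space :: "(int list \<Rightarrow> nat) measure" where
  "config_space = PiM (lattice d) (\<lambda>_. count_space {0..<q})"

definition weight :: ennreal where
  "weight = ennreal (1 / real q)"

lemma prob_space_uniform_symbols: "prob_space uniform_symbols"
  using q_pos by (intro prob_space_uniform_count_measure) auto

lemma product_prob_space_uniform_symbols: "product_prob_space (\<lambda>_. uniform_symbols)"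
proof -
  interpret prob_space uniform_symbols by (rule prob_space_uniform_symbols)
  show ?thesis by unfold_locales
qed

lemma bernoulli_eq: "bernoulli = PiM (lattice d) (\<lambda>_. uniform_symbols)"
  by (simp add: bernoulli_def bernoulli_unif_def)

lemma space_bernoulli: "space bernoulli = configs d {0..<q}"
  by (simp add: bernoulli_eq space_PiM configs_def space_uniform_count_measure)

lemma sets_bernoulli: "sets bernoulli = sets config_space"
  unfolding bernoulli_eq config_space_def by (rule sets_PiM_cong) (simp_all add: sets_uniform_count_measure)

lemma space_config_space: "space config_space = configs d {0..<q}"
  by (simp add: config_space_def space_PiM configs_def)

lemma prob_space_bernoulli: "prob_space bernoulli"
  unfolding bernoulli_eq by (rule prob_space_PiM) (rule prob_space_uniform_symbols)

lemma q_mult_weight: "of_nat q * weight = 1"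
proof -
  have "of_nat q * weight = ennreal (real q) * ennreal (1 / real q)"
    by (simp add: weight_def ennreal_of_nat_eq_real_of_nat)
  also have "\<dots> = ennreal (real q * (1 / real q))" by (rule ennreal_mult''[symmetric]) simp
  also have "\<dots> = 1" using q_pos by simp
  finally show ?thesis .
qed

lemma emeasure_bernoulli_point_cylinder:
  assumes D: "finite D" "D \<subseteq> lattice d" and x: "x \<in> PiE D (\<lambda>_. {0..<q})"
  shows "{s \<in> space bernoulli. restrict s D = x} \<in> sets bernoulli \<and>
         emeasure bernoulli {s \<in> space bernoulli. restrict s D = x} = weight ^ card D"
proof -
  interpret product_prob_space "\<lambda>_. uniform_symbols" "lattice d" by (rule product_prob_space_uniform_symbols)
  have e: "{s \<in> space bernoulli. restrict s D = x} = prod_emb (lattice d) (\<lambda>_. uniform_symbols) D (PiE D (\<lambda>i. {x i}))"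
  proof -
    have "restrict s D \<in> PiE D (\<lambda>i. {x i}) \<longleftrightarrow> restrict s D = x" for s
    proof
      assume "restrict s D \<in> PiE D (\<lambda>i. {x i})"
      then show "restrict s D = x" using x by (intro PiE_ext[of _ D "\<lambda>_. UNIV"]) (auto simp: PiE_iff)
    qed (use x in \<open>auto simp: PiE_iff\<close>)
    then show ?thesis unfolding bernoulli_eq prod_emb_def vimage_def Int_def space_PiM by blast
  qed
  have s: "(\<lambda>i. {x i}) i \<in> sets uniform_symbols" if "i \<in> D" for i using x that by (auto simp: sets_uniform_count_measure)
  have "emeasure bernoulli {s \<in> space bernoulli. restrict s D = x} = (\<Prod>i\<in>D. emeasure uniform_symbols {x i})"
    unfolding e unfolding bernoulli_eq by (rule emeasure_PiM_emb[OF D(2) D(1)]) (use s in simp)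
  also have "\<dots> = (\<Prod>i\<in>D. weight)"
  proof (intro prod.cong refl)
    fix i assume "i \<in> D"
    then have "{x i} \<subseteq> {0..<q}" using x by auto
    then show "emeasure uniform_symbols {x i} = weight" by (simp add: emeasure_uniform_count_measure weight_def)
  qed
  finally show ?thesis using e D s unfolding bernoulli_eq
    by (auto intro!: measurable_prod_emb sets_PiM_I_finite)
qed

lemma emeasure_bernoulli_cylinder:
  assumes D: "finite D" "D \<subseteq> lattice d" and Q: "Q \<subseteq> PiE D (\<lambda>_. {0..<q})"
  shows "{s \<in> space bernoulli. restrict s D \<in> Q} \<in> sets bernoulli \<and>
         emeasure bernoulli {s \<in> space bernoulli. restrict s D \<in> Q} = of_nat (card Q) * weight ^ card D"
proof -
  have finQ: "finite Q" by (rule finite_subset[OF Q finite_PiE[OF D(1)]]) simp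
  have e: "{s \<in> space bernoulli. restrict s D \<in> Q} = (\<Union>x\<in>Q. {s \<in> space bernoulli. restrict s D = x})" by auto
  have sets: "(\<lambda>x. {s \<in> space bernoulli. restrict s D = x}) ` Q \<subseteq> sets bernoulli"
    using emeasure_bernoulli_point_cylinder[OF D] Q by auto
  have "(\<Sum>x\<in>Q. emeasure bernoulli {s \<in> space bernoulli. restrict s D = x}) =
        emeasure bernoulli (\<Union>x\<in>Q. {s \<in> space bernoulli. restrict s D = x})"
    by (rule sum_emeasure[OF sets _ finQ]) (auto simp: disjoint_family_on_def)
  moreover have "(\<Sum>x\<in>Q. emeasure bernoulli {s \<in> space bernoulli. restrict s D = x}) = of_nat (card Q) * weight ^ card D"
    using emeasure_bernoulli_point_cylinder[OF D] Q by (simp add: subset_iff)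
  ultimately show ?thesis unfolding e using sets finQ by (auto intro: sets.finite_UN)
qed

lemma restrict_mem_PiE: "s \<in> space bernoulli \<Longrightarrow> D \<subseteq> lattice d \<Longrightarrow> restrict s D \<in> PiE D (\<lambda>_. {0..<q})"
  by (auto simp: space_bernoulli configs_def)

lemma cell_less_config: "s \<in> configs d {0..<q} \<Longrightarrow> z \<in> lattice d \<Longrightarrow> cell s z < q"
  by (rule cell_less) (auto simp: configs_def lattice_def length_neighbour)

lemma measurable_cell:
  assumes z: "z \<in> lattice d"
  shows "(\<lambda>s. cell s z) \<in> measurable bernoulli (count_space {0..<q})"
  unfolding measurable_count_space_eq2_countable
proof (intro conjI ballI)
  show "(\<lambda>s. cell s z) \<in> space bernoulli \<rightarrow> {0..<q}"
    using z cell_less_config by (auto simp: space_bernoulli)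
  fix a
  have N: "finite (nbhd {z})" "nbhd {z} \<subseteq> lattice d" using finite_nbhd nbhd_subset_lattice z by auto
  have "(\<lambda>s. cell s z) -` {a} \<inter> space bernoulli =
        {s \<in> space bernoulli. restrict s (nbhd {z}) \<in> {x \<in> PiE (nbhd {z}) (\<lambda>_. {0..<q}). cell x z = a}}"
    using restrict_mem_PiE[OF _ N(2)] by (auto simp: cell_restrict_nbhd)
  then show "(\<lambda>s. cell s z) -` {a} \<inter> space bernoulli \<in> sets bernoulli"
    using emeasure_bernoulli_cylinder[OF N, of "{x \<in> PiE (nbhd {z}) (\<lambda>_. {0..<q}). cell x z = a}"] by auto
qed

lemma measurable_dca_global: "F \<in> measurable bernoulli config_space"
  unfolding config_space_def dca_global_eq
proof (rule measurable_PiM_single')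
  fix z assume z: "z \<in> lattice d"
  then show "(\<lambda>s. restrict (cell s) (lattice d) z) \<in> measurable bernoulli (count_space {0..<q})"
    using measurable_cell by simp
next
  have "cell s z < q" if "s \<in> space bernoulli" "z \<in> lattice d" for s z
    using that cell_less_config by (simp add: space_bernoulli)
  then show "(\<lambda>s. restrict (cell s) (lattice d)) \<in> space bernoulli \<rightarrow> PiE (lattice d) (\<lambda>_. space (count_space {0..<q}))"
    by auto
qed

definition point_cylinder :: "int list set \<Rightarrow> (int list \<Rightarrow> nat) \<Rightarrow> (int list \<Rightarrow> nat) set" where
  "point_cylinder J p = prod_emb (lattice d) (\<lambda>_. count_space {0..<q}) J (PiE J (\<lambda>i. {p i}))"

lemma point_cylinder_in_sets:
  assumes "finite J" "J \<subseteq> lattice d" "p \<in> PiE J (\<lambda>_. {0..<q})"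
  shows "point_cylinder J p \<in> sets config_space"
  unfolding config_space_def point_cylinder_def
  by (rule measurable_prod_emb[OF assms(2)]) (rule sets_PiM_I_finite, use assms in \<open>auto simp: PiE_iff\<close>)

lemma vimage_point_cylinder:
  assumes G: "G \<in> measurable bernoulli config_space" and p: "p \<in> extensional J"
  shows "G -` point_cylinder J p \<inter> space bernoulli = {s \<in> space bernoulli. restrict (G s) J = p}"
proof -
  have "restrict f J \<in> PiE J (\<lambda>i. {p i}) \<longleftrightarrow> restrict f J = p" for f
    using p by (auto simp: PiE_iff extensional_def fun_eq_iff)
  moreover have "G s \<in> PiE (lattice d) (\<lambda>_. space (count_space {0..<q}))" if "s \<in> space bernoulli" for s
    using measurable_space[OF G that] by (simp add: config_space_def space_PiM)
  ultimately show ?thesis unfolding point_cylinder_def prod_emb_def space_PiM by blast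
qed

lemma emeasure_distr_point_cylinder:
  assumes G: "G \<in> measurable bernoulli config_space" and J: "finite J" "J \<subseteq> lattice d"
    and p: "p \<in> PiE J (\<lambda>_. {0..<q})"
  shows "emeasure (distr bernoulli config_space G) (point_cylinder J p) =
         emeasure bernoulli {s \<in> space bernoulli. restrict (G s) J = p}"
proof -
  have "p \<in> extensional J" using p by (simp add: PiE_iff)
  with emeasure_distr[OF G point_cylinder_in_sets[OF J p]] show ?thesis
    by (simp add: vimage_point_cylinder[OF G])
qed

text \<open>Boxes are finite disjoint unions of point cylinders.\<close>
lemma emeasure_distr_box:
  assumes G: "G \<in> measurable bernoulli config_space" and J: "finite J" "J \<subseteq> lattice d"
    and H: "\<And>p. p \<in> PiE J (\<lambda>_. {0..<q}) \<Longrightarrow>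
      emeasure bernoulli {s \<in> space bernoulli. restrict (G s) J = p} = weight ^ card J"
    and A: "\<And>i. i \<in> J \<Longrightarrow> A i \<subseteq> {0..<q}"
  shows "emeasure (distr bernoulli config_space G) (prod_emb (lattice d) (\<lambda>_. count_space {0..<q}) J (PiE J A))
         = of_nat (card (PiE J A)) * weight ^ card J"
proof -
  have PiE_A: "p \<in> PiE J (\<lambda>_. {0..<q})" if "p \<in> PiE J A" for p
    using that A by (force simp: PiE_iff)
  have "prod_emb (lattice d) (\<lambda>_. count_space {0..<q}) J (PiE J A) = (\<Union>p\<in>PiE J A. point_cylinder J p)"
    by (auto simp: point_cylinder_def prod_emb_def PiE_iff extensional_def fun_eq_iff)
  moreover have "finite (PiE J A)" by (rule finite_PiE[OF J(1)]) (meson A finite_atLeastLessThan finite_subset)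
  moreover have "disjoint_family_on (point_cylinder J) (PiE J A)"
    unfolding disjoint_family_on_def
  proof (intro ballI impI)
    fix m n assume "m \<in> PiE J A" "n \<in> PiE J A" "m \<noteq> n"
    then obtain x where "x \<in> J" "m x \<noteq> n x" by (metis PiE_ext)
    then show "point_cylinder J m \<inter> point_cylinder J n = {}"
      by (fastforce simp: point_cylinder_def prod_emb_def Pi_iff)
  qed
  moreover have "point_cylinder J ` PiE J A \<subseteq> sets (distr bernoulli config_space G)"
    using point_cylinder_in_sets[OF J PiE_A] by auto
  ultimately have "emeasure (distr bernoulli config_space G) (prod_emb (lattice d) (\<lambda>_. count_space {0..<q}) J (PiE J A))
      = (\<Sum>p\<in>PiE J A. emeasure (distr bernoulli config_space G) (point_cylinder J p))"
    by (simp add: sum_emeasure)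
  also have "\<dots> = (\<Sum>p\<in>PiE J A. weight ^ card J)"
    using emeasure_distr_point_cylinder[OF G J PiE_A] H[OF PiE_A] by simp
  finally show ?thesis by simp
qed

lemma weight_power_cancel: assumes "c * q ^ j = q ^ pj" shows "of_nat c * weight ^ pj = weight ^ j"
proof -
  have "of_nat c * weight ^ pj = of_nat c * (of_nat q * weight) ^ j * weight ^ pj" by (simp add: q_mult_weight)
  also have "\<dots> = of_nat (c * q ^ j) * weight ^ j * weight ^ pj" by (simp add: power_mult_distrib algebra_simps)
  also have "\<dots> = (of_nat q * weight) ^ pj * weight ^ j" unfolding assms by (simp add: power_mult_distrib algebra_simps)
  finally show ?thesis by (simp add: q_mult_weight)
qed

lemma restrict_dca_global_eq_iff:
  assumes s: "s \<in> space bernoulli" and J: "J \<subseteq> lattice d" and p: "p \<in> PiE J (\<lambda>_. {0..<q})"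
  shows "restrict (F s) J = p \<longleftrightarrow> restrict s (nbhd J) \<in> preimages J p"
proof -
  have "restrict (F s) J = p \<longleftrightarrow> (\<forall>z\<in>J. cell s z = p z)"
    using J p by (auto simp: dca_global_eq PiE_iff extensional_def fun_eq_iff subset_iff)
  also have "\<dots> \<longleftrightarrow> restrict s (nbhd J) \<in> preimages J p"
    using restrict_mem_PiE[OF s nbhd_subset_lattice[OF J]] by (simp add: preimages_def cell_restrict_nbhd)
  finally show ?thesis .
qed

lemma emeasure_dca_global_cylinder:
  assumes d: "1 \<le> d" and surj: surjective and J: "finite J" "J \<subseteq> lattice d"
    and p: "p \<in> PiE J (\<lambda>_. {0..<q})"
  shows "emeasure bernoulli {s \<in> space bernoulli. restrict (F s) J = p} = weight ^ card J"
proof -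
  have eq: "{s \<in> space bernoulli. restrict (F s) J = p} =
      {s \<in> space bernoulli. restrict s (nbhd J) \<in> preimages J p}"
    using restrict_dca_global_eq_iff[OF _ J(2) p] by blast
  have "preimages J p \<subseteq> PiE (nbhd J) (\<lambda>_. {0..<q})" by (auto simp: preimages_def)
  then have "emeasure bernoulli {s \<in> space bernoulli. restrict (F s) J = p} =
      of_nat (card (preimages J p)) * weight ^ card (nbhd J)"
    unfolding eq
    by (rule conjunct2[OF emeasure_bernoulli_cylinder[OF finite_nbhd[OF J(1)] nbhd_subset_lattice[OF J(2)]]])
  also have "\<dots> = weight ^ card J" by (rule weight_power_cancel[OF card_preimages_eq[OF d surj J p]])
  finally show ?thesis .
qed

lemma emeasure_id_cylinder:
  assumes J: "finite J" "J \<subseteq> lattice d" and p: "p \<in> PiE J (\<lambda>_. {0..<q})"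
  shows "emeasure bernoulli {s \<in> space bernoulli. restrict ((\<lambda>s. s) s) J = p} = weight ^ card J"
  using emeasure_bernoulli_point_cylinder[OF J p] by simp

lemma finite_measure_distr: "G \<in> measurable bernoulli config_space \<Longrightarrow> finite_measure (distr bernoulli config_space G)"
  using prob_space.prob_space_distr[OF prob_space_bernoulli] unfolding prob_space_def by blast

lemma measurable_id_config_space: "(\<lambda>s. s) \<in> measurable bernoulli config_space" by (rule measurable_ident_sets[OF sets_bernoulli])

lemma distr_dca_global_eq_id:
  assumes d: "1 \<le> d" and S: surjective
  shows "distr bernoulli config_space F = distr bernoulli config_space (\<lambda>s. s)"
proof (rule measure_eqI_PiM_infinite[where I="lattice d" and M="\<lambda>_. count_space {0..<q}"])
  show "sets (distr bernoulli config_space F) = sets (PiM (lattice d) (\<lambda>_. count_space {0..<q}))"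
    by (simp add: config_space_def)
  show "sets (distr bernoulli config_space (\<lambda>s. s)) = sets (PiM (lattice d) (\<lambda>_. count_space {0..<q}))"
    by (simp add: config_space_def)
  show "finite_measure (distr bernoulli config_space F)" by (rule finite_measure_distr[OF measurable_dca_global])
  fix A J assume J: "finite J" "J \<subseteq> lattice d" and A: "\<And>i. i \<in> J \<Longrightarrow> A i \<in> sets (count_space {0..<q})"
  have A': "\<And>i. i \<in> J \<Longrightarrow> A i \<subseteq> {0..<q}" using A by simp
  show "emeasure (distr bernoulli config_space F) (prod_emb (lattice d) (\<lambda>_. count_space {0..<q}) J (PiE J A)) =
        emeasure (distr bernoulli config_space (\<lambda>s. s)) (prod_emb (lattice d) (\<lambda>_. count_space {0..<q}) J (PiE J A))"
    using emeasure_distr_box[OF measurable_dca_global J emeasure_dca_global_cylinder[OF d S J] A']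
      emeasure_distr_box[OF measurable_id_config_space J emeasure_id_cylinder[OF J] A'] by simp
qed

lemma distr_dca_global_neq_id:
  assumes "\<not> surjective"
  shows "distr bernoulli config_space F \<noteq> distr bernoulli config_space (\<lambda>s. s)"
proof
  assume eq: "distr bernoulli config_space F = distr bernoulli config_space (\<lambda>s. s)"
  have "F ` configs d {0..<q} \<subseteq> configs d {0..<q}"
    using measurable_space[OF measurable_dca_global] by (auto simp: space_bernoulli space_config_space)
  then obtain y where y: "y \<in> configs d {0..<q}" "y \<notin> F ` configs d {0..<q}"
    using assms unfolding surjective_def by blast
  obtain W where W: "finite W" "W \<subseteq> lattice d"
    and unmatched: "\<not> (\<exists>s\<in>configs d {0..<q}. \<forall>z\<in>W. cell s z = y z)"
    using in_image_if_windows_in_image[OF y(1)] y(2) by blast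
  define p where "p = restrict y W"
  have p: "p \<in> PiE W (\<lambda>_. {0..<q})" using y(1) W(2) by (auto simp: p_def configs_def)
  have no_preimage: "{s \<in> space bernoulli. restrict (F s) W = p} = {}"
    using unmatched W(2) by (auto simp: p_def space_bernoulli dca_global_eq fun_eq_iff subset_iff)
  have "emeasure (distr bernoulli config_space F) (point_cylinder W p) = 0"
    by (simp only: emeasure_distr_point_cylinder[OF measurable_dca_global W p] no_preimage emeasure_empty)
  moreover have "emeasure (distr bernoulli config_space (\<lambda>s. s)) (point_cylinder W p) = weight ^ card W"
    using emeasure_distr_point_cylinder[OF measurable_id_config_space W p]
      emeasure_bernoulli_point_cylinder[OF W p] by simp
  moreover have "weight ^ card W \<noteq> 0" using q_pos by (simp add: weight_def)
  ultimately show False using eq by simp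
qed

end

subsection \<open>The reduction\<close>

text \<open>The stochastic CA that applies the local rule of a deterministic CA to the random field,
  ignoring the current configuration, and the one that copies the random symbol at each cell.\<close>
definition random_rule_sca :: "dca \<Rightarrow> sca" where
  "random_rule_sca A = (case A of (q, V, tab) \<Rightarrow> (q, q, [], V, map (\<lambda>(w, a). (([], w), a)) tab))"

definition copy_random_sca :: "nat \<Rightarrow> nat \<Rightarrow> sca" where
  "copy_random_sca d q = (q, q, [], [replicate d 0], map (\<lambda>i. (([], [i]), i)) (rev [0..<q]))"

definition copy_entry_code :: "nat \<Rightarrow> nat" where
  "copy_entry_code i = prod_encode (prod_encode (0, list_encode [i]), i)"

definition copy_table_code :: "nat \<Rightarrow> nat" where
  "copy_table_code q = rec_nat 0 (\<lambda>n acc. Suc (prod_encode (copy_entry_code n, acc))) q"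

definition lift_entry_code :: "nat \<Rightarrow> nat" where
  "lift_entry_code p = prod_encode (prod_encode (0, fst (prod_decode p)), snd (prod_decode p))"

definition origin_code :: "nat \<Rightarrow> nat" where
  "origin_code d = list_encode [list_encode (replicate d (int_encode 0))]"

definition reduction :: "nat \<Rightarrow> nat \<Rightarrow> nat" where
  "reduction d n = prod_encode
     (prod_encode (fst (prod_decode n), prod_encode (fst (prod_decode n), prod_encode (0,
        prod_encode (fst (prod_decode (snd (prod_decode n))),
                     map_code lift_entry_code (snd (prod_decode (snd (prod_decode n)))))))),
      prod_encode (fst (prod_decode n), prod_encode (fst (prod_decode n), prod_encode (0,
        prod_encode (origin_code d, copy_table_code (fst (prod_decode n)))))))"

lemma copy_table_code_eq: "copy_table_code q = list_encode (map copy_entry_code (rev [0..<q]))"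
  by (induction q) (auto simp: copy_table_code_def)

lemma recursive1_copy_entry_code: "recursive1 copy_entry_code"
proof -
  have "recursive 1 (\<lambda>xs. prod_encode (prod_encode (0, Suc (prod_encode (xs!0, 0))), xs!0))"
    by (rule recursive2_apply[OF recursive2_prod_encode recursive2_apply[OF recursive2_prod_encode
          recursive_const recursive1_apply[OF recursive1_Suc recursive2_apply[OF recursive2_prod_encode
          recursive_arg_1_0 recursive_const]]] recursive_arg_1_0])
  then show ?thesis unfolding recursive1_def copy_entry_code_def by simp
qed

lemma recursive1_copy_table_code: "recursive1 copy_table_code"
proof -
  have "recursive 2 (\<lambda>xs. Suc (prod_encode (copy_entry_code (xs!0), xs!1)))"
    by (rule recursive1_apply[OF recursive1_Suc recursive2_apply[OF recursive2_prod_encode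
          recursive1_apply[OF recursive1_copy_entry_code recursive_arg_2_0] recursive_arg_2_1]])
  then show ?thesis
    unfolding copy_table_code_def by (intro recursive1_rec_nat) (simp add: recursive2_def)
qed

lemma recursive1_lift_entry_code: "recursive1 lift_entry_code"
  unfolding recursive1_def lift_entry_code_def
  by (rule recursive2_apply[OF recursive2_prod_encode recursive2_apply[OF recursive2_prod_encode
        recursive_const recursive1_apply[OF recursive1_fst_prod_decode recursive_arg_1_0]]
        recursive1_apply[OF recursive1_snd_prod_decode recursive_arg_1_0]])

lemma computable_reduction: "computable (reduction d)"
proof -
  have fst: "recursive 1 (\<lambda>xs. fst (prod_decode (xs!0)))"
    and snd: "recursive 1 (\<lambda>xs. snd (prod_decode (xs!0)))"
    by (rule recursive1_apply[OF _ recursive_arg_1_0], fact recursive1_fst_prod_decode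
        recursive1_snd_prod_decode)+
  note pair = recursive2_apply[OF recursive2_prod_encode]
  have "recursive 1 (\<lambda>xs. reduction d (xs!0))"
    unfolding reduction_def
    by (rule pair[OF pair[OF fst pair[OF fst pair[OF recursive_const pair[OF
          recursive1_apply[OF recursive1_fst_prod_decode snd]
          recursive1_apply[OF recursive1_map_code[OF recursive1_lift_entry_code]
            recursive1_apply[OF recursive1_snd_prod_decode snd]]]]]]
          pair[OF fst pair[OF fst pair[OF recursive_const pair[OF recursive_const
            recursive1_apply[OF recursive1_copy_table_code fst]]]]]])
  then obtain g where "recfn 1 g" "\<forall>xs. length xs = 1 \<longrightarrow> g xs = reduction d (xs!0)"
    unfolding recursive_def by blast
  then show ?thesis unfolding computable_def by (intro exI[of _ g]) auto
qed

lemma pair_decode_reduction: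
  "pair_decode (reduction d n) =
     (random_rule_sca (dca_decode n), copy_random_sca d (fst (dca_decode n)))"
proof -
  obtain a b where ab: "prod_decode n = (a, b)" by (cases "prod_decode n")
  obtain c e where ce: "prod_decode b = (c, e)" by (cases "prod_decode b")
  have dec: "dca_decode n = (a, dec_vecs c,
      map (\<lambda>p. case prod_decode p of (u, v) \<Rightarrow> (list_decode u, v)) (list_decode e))"
    by (simp add: dca_decode_def ab ce)
  have red: "reduction d n = prod_encode
     (prod_encode (a, prod_encode (a, prod_encode (0, prod_encode (c, map_code lift_entry_code e)))),
      prod_encode (a, prod_encode (a, prod_encode (0, prod_encode (origin_code d, copy_table_code a)))))"
    by (simp add: reduction_def ab ce)
  have "dec_vecs 0 = []" "dec_vecs (origin_code d) = [replicate d 0]"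
    by (simp_all add: dec_vecs_def origin_code_def dec_intlist_def)
  moreover have "map (\<lambda>p. case prod_decode p of (uw, v) \<Rightarrow>
                 (case prod_decode uw of (u, w) \<Rightarrow> ((list_decode u, list_decode w), v)))
          (list_decode (map_code lift_entry_code e)) =
      map (\<lambda>(w, a). (([], w), a)) (map (\<lambda>p. case prod_decode p of (u, v) \<Rightarrow> (list_decode u, v)) (list_decode e))"
    unfolding map_code_eq list_encode_inverse by (auto simp: lift_entry_code_def split: prod.splits)
  moreover have "map (\<lambda>p. case prod_decode p of (uw, v) \<Rightarrow>
                 (case prod_decode uw of (u, w) \<Rightarrow> ((list_decode u, list_decode w), v)))
          (list_decode (copy_table_code a)) = map (\<lambda>i. (([], [i]), i)) (rev [0..<a])"
    unfolding copy_table_code_eq list_encode_inverse by (auto simp: copy_entry_code_def)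
  ultimately show ?thesis
    unfolding red dec pair_decode_def sca_decode_def random_rule_sca_def copy_random_sca_def
    by (simp del: list_encode.simps)
qed

lemma map_of_lift_table:
  "map_of (map (\<lambda>(w, a). ((([] :: nat list), w), a)) tab) ([], w) = map_of tab w"
  by (induction tab) auto

lemma map_of_copy_table:
  "i \<in> set xs \<Longrightarrow> map_of (map (\<lambda>i. ((([] :: nat list), [i]), i)) xs) ([], [i]) = Some i"
  by (induction xs) auto

lemma sca_F_random_rule_sca: "sca_F d (random_rule_sca A) c = dca_global d A"
  by (cases A) (simp add: sca_F_def dca_global_def random_rule_sca_def map_of_lift_table fun_eq_iff)

lemma sca_F_copy_random_sca:
  assumes s: "s \<in> configs d {0..<q}"
  shows "sca_F d (copy_random_sca d q) c s = s"
proof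
  fix z show "sca_F d (copy_random_sca d q) c s z = s z"
  proof (cases "z \<in> lattice d")
    case True
    then have "vadd z (replicate d 0) = z" by (intro vadd_replicate_0) (simp add: lattice_def)
    moreover have "s z < q" using s True by (auto simp: configs_def)
    then have "the (map_of (map (\<lambda>i. ((([] :: nat list), [i]), i)) (rev [0..<q])) ([], [s z])) = s z"
      using map_of_copy_table[of "s z" "rev [0..<q]"] by simp
    ultimately show ?thesis using True by (simp add: sca_F_def copy_random_sca_def)
  next
    case False
    then show ?thesis using s by (auto simp: sca_F_def copy_random_sca_def configs_def PiE_iff extensional_def)
  qed
qed

lemma sca_valid_copy_random_sca: "1 \<le> q \<Longrightarrow> sca_valid d (copy_random_sca d q)"
  by (auto simp: sca_valid_def copy_random_sca_def length_Suc_conv map_of_copy_table)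

lemma (in cellular_automaton) sca_valid_random_rule_sca: "sca_valid d (random_rule_sca (q, V, tab))"
  using valid by (auto simp: sca_valid_def dca_valid_def random_rule_sca_def map_of_lift_table)

context cellular_automaton
begin

lemma configs_nonempty: "configs d {0..<q} \<noteq> {}"
  using q_pos by (auto simp: configs_def PiE_eq_empty_iff)

lemma sca_N_reduction_iff:
  "(\<forall>c\<in>configs d {0..<q}. sca_N d (random_rule_sca (q, V, tab)) c = sca_N d (copy_random_sca d q) c)
    \<longleftrightarrow> surjective"
proof -
  have "sca_N d (random_rule_sca (q, V, tab)) c = F ` configs d {0..<q}" for c
    by (simp add: sca_N_def sca_randoms_def random_rule_sca_def sca_F_random_rule_sca[of _ "(q, V, tab)", unfolded random_rule_sca_def, simplified])
  moreover have "sca_N d (copy_random_sca d q) c = configs d {0..<q}" for c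
    unfolding sca_N_def by (simp add: sca_randoms_def copy_random_sca_def sca_F_copy_random_sca[unfolded copy_random_sca_def] cong: image_cong)
  ultimately show ?thesis using configs_nonempty by (auto simp: surjective_def)
qed

lemma sca_S_reduction_iff:
  assumes d: "1 \<le> d"
  shows "(\<forall>c\<in>configs d {0..<q}. sca_S d (random_rule_sca (q, V, tab)) c = sca_S d (copy_random_sca d q) c)
    \<longleftrightarrow> surjective"
proof -
  have "sca_S d (random_rule_sca (q, V, tab)) c = distr bernoulli config_space F" for c
    using sca_F_random_rule_sca[of d "(q, V, tab)" c]
    by (simp add: sca_S_def sca_randoms_def sca_states_def random_rule_sca_def bernoulli_def config_space_def)
  moreover have "sca_S d (copy_random_sca d q) c = distr bernoulli config_space (\<lambda>s. s)" for c
  proof -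
    have "sca_S d (copy_random_sca d q) c = distr bernoulli config_space (sca_F d (copy_random_sca d q) c)"
      by (simp add: sca_S_def sca_randoms_def sca_states_def copy_random_sca_def bernoulli_def config_space_def)
    also have "\<dots> = distr bernoulli config_space (\<lambda>s. s)"
      by (rule distr_cong) (simp_all add: space_bernoulli sca_F_copy_random_sca)
    finally show ?thesis .
  qed
  ultimately show ?thesis
    using configs_nonempty distr_dca_global_eq_id[OF d] distr_dca_global_neq_id by auto
qed

end

lemma sca_states_random_rule_sca: "sca_states (random_rule_sca (q, V, tab)) = q"
  by (simp add: sca_states_def random_rule_sca_def)

lemma sca_states_copy_random_sca: "sca_states (copy_random_sca d q) = q"
  by (simp add: sca_states_def copy_random_sca_def)

lemma reduction_correct:
  assumes d: "1 \<le> d" and valid: "fst (SURJ d) n"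
  shows "pair_valid d (reduction d n) \<and>
      (snd (SURJ d) n \<longleftrightarrow> snd (P_N d) (reduction d n)) \<and>
      (snd (SURJ d) n \<longleftrightarrow> snd (P_S d) (reduction d n))"
proof -
  obtain q V tab where dec: "dca_decode n = (q, V, tab)" by (metis prod_cases3)
  interpret cellular_automaton d q V tab
    using valid by unfold_locales (simp add: SURJ_def dec)
  have pair: "pair_decode (reduction d n) = (random_rule_sca (q, V, tab), copy_random_sca d q)"
    using pair_decode_reduction[of d n] by (simp add: dec)
  have "pair_valid d (reduction d n)"
    unfolding pair_valid_def pair
    using sca_valid_random_rule_sca sca_valid_copy_random_sca[OF q_pos]
    by (simp add: sca_states_random_rule_sca sca_states_copy_random_sca)
  moreover have "snd (P_N d) (reduction d n) \<longleftrightarrow> surjective"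
    using sca_N_reduction_iff by (simp add: P_N_def pair sca_states_random_rule_sca)
  moreover have "snd (P_S d) (reduction d n) \<longleftrightarrow> surjective"
    using sca_S_reduction_iff[OF d] by (simp add: P_S_def pair sca_states_random_rule_sca)
  moreover have "snd (SURJ d) n \<longleftrightarrow> surjective"
    by (simp add: SURJ_def dec dca_surjective_def surjective_def)
  ultimately show ?thesis by blast
qed

theorem theorem1:
  fixes d :: nat
  assumes "d \<ge> 1"
  shows "reduces_to (SURJ d) (P_N d) \<and> reduces_to (SURJ d) (P_S d)"
proof -
  have "fst (P_N d) = pair_valid d" "fst (P_S d) = pair_valid d"
    by (simp_all add: P_N_def P_S_def)
  with reduction_correct[OF assms] computable_reduction show ?thesis
    unfolding reduces_to_def by metis
qed

end
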